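(* Let $\theta\in\mathbb{R}\setminus\mathbb{Q}$, let $A_\theta$ be the irrational rotation C*-algebra generated by unitaries $U,V$ with $UV=e^{2\pi i\theta}VU$, and let $a=\sum_{(m,n)\in\mathbb{Z}^2} a_{m,n}U^mV^n\in A_\theta^\infty$ with $a>0$, $a_{0,0}=1$, and only finitely many of the coefficients $a_{m,n}$ nonzero. For $r\in\mathbb{C}$ put $$x_r=\sum_{(m,n)\in\mathbb{Z}^2,\ (m,n)\neq(0,0)} a_{m,n}\, r^{|m|+|n|}\, U^mV^n,\qquad P_r(a)=1+x_r .$$ Then there is an open neighbourhood $W$ of $[0,1]$ in $\mathbb{C}$ such that for every $r\in W$ the element $\log P_r(a)$ can be defined (via the holomorphic functional calculus with the standard branch of the logarithm).
   Context: $A_\theta^\infty=\{\sum_{(m,n)\in\mathbb{Z}^2}a_{m,n}U^mV^n : (a_{m,n}) \text{ rapidly decreasing}\}$ is the smooth noncommutative two torus, a dense *-subalgebra of $A_\theta$. The notation $a>0$ means $a$ is self-adjoint with spectrum contained in $(0,\infty)$ (strictly positive). *)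

theory Defs
  imports "HOL-Analysis.Analysis"
begin

text \<open>An element sum a(m,n) U^m V^n with finitely many nonzero coefficients is
  represented by its coefficient function a :: int*int => complex.
  Relation U V = e^{2 pi i theta} V U gives
  (U^m V^n)(U^k V^l) = e^{-2 pi i theta n k} U^{m+k} V^{n+l}
  and (U^m V^n)^* = e^{-2 pi i theta m n} U^{-m} V^{-n}.
  The C*-norm is the operator norm in the (faithful) regular representation on
  l2(Z^2), computed on the dense subspace of finitely supported vectors; A_theta is
  the completion, so invertibility in A_theta is the existence of a norm-Cauchy
  sequence of finite elements converging to a two-sided inverse.\<close>

type_synonym coeffs = "int \<times> int \<Rightarrow> complex"

definition supp2 :: "coeffs \<Rightarrow> (int \<times> int) set" where
  "supp2 f = {k. f k \<noteq> 0}"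

definition finsupp2 :: "coeffs \<Rightarrow> bool" where
  "finsupp2 f \<longleftrightarrow> finite (supp2 f)"

text \<open>Twisted convolution product (also the left regular representation on l2(Z^2)).\<close>
definition twprod :: "real \<Rightarrow> coeffs \<Rightarrow> coeffs \<Rightarrow> coeffs" where
  "twprod \<theta> f g = (\<lambda>(p, q). \<Sum>(m, n)\<in>supp2 f.
      f (m, n) * g (p - m, q - n) * cis (- 2 * pi * \<theta> * of_int (n * (p - m))))"

definition twstar :: "real \<Rightarrow> coeffs \<Rightarrow> coeffs" where
  "twstar \<theta> f = (\<lambda>(p, q). cnj (f (- p, - q)) * cis (- 2 * pi * \<theta> * of_int (p * q)))"

definition twone :: coeffs where
  "twone = (\<lambda>k. if k = (0, 0) then 1 else 0)"

definition l2norm :: "coeffs \<Rightarrow> real" where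
  "l2norm \<xi> = sqrt (\<Sum>k\<in>supp2 \<xi>. (cmod (\<xi> k))\<^sup>2)"

definition twnorm :: "real \<Rightarrow> coeffs \<Rightarrow> real" where
  "twnorm \<theta> f = Sup {l2norm (twprod \<theta> f \<xi>) | \<xi>. finsupp2 \<xi> \<and> l2norm \<xi> \<le> 1}"

definition tw_invertible :: "real \<Rightarrow> coeffs \<Rightarrow> bool" where
  "tw_invertible \<theta> x \<longleftrightarrow>
     (\<exists>y :: nat \<Rightarrow> coeffs. (\<forall>k. finsupp2 (y k)) \<and>
        (\<forall>e>0. \<exists>N. \<forall>i\<ge>N. \<forall>j\<ge>N. twnorm \<theta> (y i - y j) < e) \<and>
        (\<lambda>k. twnorm \<theta> (twprod \<theta> x (y k) - twone)) \<longlonglongrightarrow> 0 \<and>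
        (\<lambda>k. twnorm \<theta> (twprod \<theta> (y k) x - twone)) \<longlonglongrightarrow> 0)"

definition tw_spectrum :: "real \<Rightarrow> coeffs \<Rightarrow> complex set" where
  "tw_spectrum \<theta> x = {z. \<not> tw_invertible \<theta> (x - (\<lambda>k. z * twone k))}"

definition tw_strictly_pos :: "real \<Rightarrow> coeffs \<Rightarrow> bool" where
  "tw_strictly_pos \<theta> a \<longleftrightarrow> twstar \<theta> a = a \<and> tw_spectrum \<theta> a \<subseteq> complex_of_real ` {0<..}"

definition P_r :: "coeffs \<Rightarrow> complex \<Rightarrow> coeffs" where
  "P_r a r = (\<lambda>(m, n). if (m, n) = (0, 0) then 1
                        else a (m, n) * r ^ (nat \<bar>m\<bar> + nat \<bar>n\<bar>))"

text \<open>log x is definable by the holomorphic functional calculus with the principal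
  branch Ln: Ln is holomorphic on an open neighbourhood of the spectrum of x.\<close>
definition tw_log_definable :: "real \<Rightarrow> coeffs \<Rightarrow> bool" where
  "tw_log_definable \<theta> x \<longleftrightarrow>
     (\<exists>\<Omega>. open \<Omega> \<and> tw_spectrum \<theta> x \<subseteq> \<Omega> \<and> Ln holomorphic_on \<Omega>)"

end

theory Submission
  imports Defs
begin

text \<open>Positivity of \<open>a\<close> is used in the form \<open>\<langle>a\<xi>, \<xi>\<rangle> \<ge> m \<parallel>\<xi>\<parallel>\<^sup>2\<close> with \<open>m > 0\<close>: otherwise unit vectors almost
  minimising the form would be approximate null vectors of \<open>a - \<mu>\<close>, \<open>\<mu> \<le> 0\<close> the bottom of the form,
  putting \<open>\<mu>\<close> into the spectrum. For \<open>0 \<le> r < 1\<close> the coefficients of \<open>P\<^sub>r(a)\<close> are those of \<open>a\<close>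
  multiplied by \<open>r\<^bsup>|m|\<^esup> r\<^bsup>|n|\<^esup>\<close>, a limit of normalised autocorrelations of truncated geometric
  sequences \<open>h\<close>; averaging \<open>\<langle>a(h\<xi>), h\<xi>\<rangle>\<close> over the translates of \<open>h\<close> shows that this Schur
  multiplication preserves the lower bound \<open>m\<close>. So for \<open>r \<in> [0, 1]\<close> the hermitian element \<open>P\<^sub>r(a)\<close>
  has its form between \<open>m\<close> and \<open>\<parallel>a\<parallel>\<^sub>1 + m\<close>, and a Neumann series shows that \<open>P\<^sub>r(a) + e + t\<close> is
  invertible whenever \<open>t \<ge> 0\<close> and \<open>\<parallel>e\<parallel> \<le> m/2\<close>. Since \<open>r \<mapsto> P\<^sub>r(a)\<close> is norm continuous, the
  spectrum of \<open>P\<^sub>r(a)\<close> avoids \<open>(-\<infinity>, 0]\<close>, where the principal logarithm is holomorphic, for all \<open>r\<close>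
  in a neighbourhood of \<open>[0, 1]\<close>.\<close>

lemma le_mult_if_quadratic_nonneg:
  fixes a b c :: real
  assumes b: "0 \<le> b" and c: "0 \<le> c" and h: "\<And>t. 0 \<le> a + 2 * t * b + t\<^sup>2 * b * c"
  shows "b \<le> a * c"
proof (cases "c = 0")
  case True
  have "b = 0"
  proof (rule ccontr)
    assume "b \<noteq> 0"
    then have "a + 2 * (- (a + 1) / (2 * b)) * b = -1" using b by (simp add: field_simps)
    then show False using h[of "- (a + 1) / (2 * b)"] True by simp
  qed
  then show ?thesis using True by simp
next
  case False
  then have "0 \<le> a - b / c"
    using h[of "- 1 / c"] by (simp add: field_simps power2_eq_square)
  then show ?thesis using c False by (simp add: field_simps)
qed

lemma le_if_mult_self_le: "(x::real) * x \<le> B * x \<Longrightarrow> 0 \<le> B \<Longrightarrow> x \<le> B"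
  by (cases "x \<le> 0") (auto dest: mult_right_le_imp_le)

lemma supp2_subsetI: "(\<And>k. f k \<noteq> 0 \<Longrightarrow> k \<in> S) \<Longrightarrow> supp2 f \<subseteq> S"
  by (auto simp: supp2_def)

lemma finsupp2_subsetI: "finite S \<Longrightarrow> (\<And>k. f k \<noteq> 0 \<Longrightarrow> k \<in> S) \<Longrightarrow> finsupp2 f"
  unfolding finsupp2_def by (meson finite_subset supp2_subsetI)

lemma finsupp2_add [intro]: "finsupp2 f \<Longrightarrow> finsupp2 g \<Longrightarrow> finsupp2 (\<lambda>k. f k + g k)"
  by (rule finsupp2_subsetI[where S="supp2 f \<union> supp2 g"]) (auto simp: finsupp2_def supp2_def)

lemma finsupp2_diff [intro]: "finsupp2 f \<Longrightarrow> finsupp2 g \<Longrightarrow> finsupp2 (\<lambda>k. f k - g k)"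
  by (rule finsupp2_subsetI[where S="supp2 f \<union> supp2 g"]) (auto simp: finsupp2_def supp2_def)

lemma finsupp2_minus [intro]: "finsupp2 f \<Longrightarrow> finsupp2 g \<Longrightarrow> finsupp2 (f - g)"
  using finsupp2_diff by (simp add: fun_diff_def)

lemma finsupp2_mult_left [intro]: "finsupp2 f \<Longrightarrow> finsupp2 (\<lambda>k. c k * f k)"
  by (rule finsupp2_subsetI[where S="supp2 f"]) (auto simp: finsupp2_def supp2_def)

lemma finsupp2_mult_right [intro]: "finsupp2 f \<Longrightarrow> finsupp2 (\<lambda>k. f k * c k)"
  by (rule finsupp2_subsetI[where S="supp2 f"]) (auto simp: finsupp2_def supp2_def)

lemma finsupp2_scale [intro]: "finsupp2 f \<Longrightarrow> finsupp2 (\<lambda>k. c * f k)"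
  by (rule finsupp2_mult_left)

lemma finsupp2_uminus [intro]: "finsupp2 f \<Longrightarrow> finsupp2 (\<lambda>k. - f k)"
  using finsupp2_scale[of f "-1"] by simp

lemma finsupp2_zero [intro]: "finsupp2 (\<lambda>k. 0)"
  by (simp add: finsupp2_def supp2_def)

lemma finsupp2_sum:
  "finite K \<Longrightarrow> (\<And>i. i \<in> K \<Longrightarrow> finsupp2 (G i)) \<Longrightarrow> finsupp2 (\<lambda>p. \<Sum>i\<in>K. G i p)"
  by (induction K rule: finite_induct) auto

lemma finsupp2_translate [intro]: "finsupp2 \<xi> \<Longrightarrow> finsupp2 (\<lambda>p. \<xi> (p - k) * c p)"
proof (rule finsupp2_subsetI[where S="(+) k ` supp2 \<xi>"])
  fix p assume "\<xi> (p - k) * c p \<noteq> 0"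
  then have "p - k \<in> supp2 \<xi>" by (simp add: supp2_def)
  then show "p \<in> (+) k ` supp2 \<xi>" by (rule rev_image_eqI) simp
qed (auto simp: finsupp2_def)

lemma twone_eq: "twone k = (if k = 0 then 1 else 0)"
  by (simp add: twone_def zero_prod_def)

lemma supp2_twone: "supp2 twone = {0}"
  by (auto simp: supp2_def twone_eq)

lemma finsupp2_twone [intro]: "finsupp2 twone"
  by (simp add: finsupp2_def supp2_twone)

lemma sum_translate:
  fixes F :: "'a::cancel_semigroup_add \<Rightarrow> 'b::comm_monoid_add"
  assumes "finite T" "(+) k ` B \<subseteq> T" "\<And>j. j \<in> T \<Longrightarrow> j \<notin> (+) k ` B \<Longrightarrow> F j = 0"
  shows "sum F T = (\<Sum>l\<in>B. F (k + l))"
proof -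
  have "sum F T = sum F ((+) k ` B)"
    by (rule sum.mono_neutral_right[OF assms(1) assms(2)]) (use assms(3) in blast)
  also have "\<dots> = (\<Sum>l\<in>B. F (k + l))" by (simp add: sum.reindex inj_on_def o_def)
  finally show ?thesis .
qed

lemma sum_translate_supp2:
  assumes "finite T" "(+) k ` supp2 g \<subseteq> T"
  shows "(\<Sum>j\<in>T. g (j - k) * F j) = (\<Sum>l\<in>supp2 g. g l * F (k + l))"
proof (subst sum_translate[OF assms])
  fix j assume "j \<notin> (+) k ` supp2 g"
  have "g (j - k) = 0"
  proof (rule ccontr)
    assume "g (j - k) \<noteq> 0"
    then have "j \<in> (+) k ` supp2 g" by (intro rev_image_eqI[of "j - k"]) (auto simp: supp2_def)
    with \<open>j \<notin> (+) k ` supp2 g\<close> show False ..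
  qed
  then show "g (j - k) * F j = 0" by simp
qed simp

definition l2inner :: "coeffs \<Rightarrow> coeffs \<Rightarrow> complex" where
  "l2inner u v = (\<Sum>k\<in>supp2 u. u k * cnj (v k))"

definition l1norm :: "coeffs \<Rightarrow> real" where
  "l1norm f = (\<Sum>k\<in>supp2 f. cmod (f k))"

lemma l1norm_eq: "finite S \<Longrightarrow> supp2 f \<subseteq> S \<Longrightarrow> l1norm f = (\<Sum>k\<in>S. cmod (f k))"
  unfolding l1norm_def by (rule sum.mono_neutral_left) (auto simp: supp2_def)

lemma l1norm_nonneg: "0 \<le> l1norm f"
  unfolding l1norm_def by (simp add: sum_nonneg)

lemma l2inner_eq: "finite S \<Longrightarrow> supp2 u \<subseteq> S \<Longrightarrow> l2inner u v = (\<Sum>k\<in>S. u k * cnj (v k))"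
  unfolding l2inner_def by (rule sum.mono_neutral_left) (auto simp: supp2_def)

lemma l2inner_zero_left [simp]: "l2inner (\<lambda>k. 0) v = 0"
  by (simp add: l2inner_def supp2_def)

lemma l2inner_eq_right:
  assumes "finsupp2 u" "finite S" "supp2 v \<subseteq> S"
  shows "l2inner u v = (\<Sum>k\<in>S. u k * cnj (v k))"
proof -
  have f: "finite (S \<union> supp2 u)" using assms by (auto simp: finsupp2_def)
  have "l2inner u v = (\<Sum>k\<in>S \<union> supp2 u. u k * cnj (v k))" by (rule l2inner_eq[OF f]) auto
  also have "\<dots> = (\<Sum>k\<in>S. u k * cnj (v k))"
    using assms f by (intro sum.mono_neutral_right) (auto simp: supp2_def)
  finally show ?thesis .
qed

lemma l2norm_eq: "finite S \<Longrightarrow> supp2 u \<subseteq> S \<Longrightarrow> l2norm u = L2_set (\<lambda>k. cmod (u k)) S"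
  unfolding l2norm_def L2_set_def
  by (rule arg_cong[where f=sqrt], rule sum.mono_neutral_left) (auto simp: supp2_def)

lemma l2norm_nonneg: "0 \<le> l2norm u"
  unfolding l2norm_def by (simp add: sum_nonneg)

lemma l2norm_zero [simp]: "l2norm (\<lambda>k. 0) = 0"
  by (simp add: l2norm_def supp2_def)

lemma l2norm_zero_iff: "finsupp2 u \<Longrightarrow> l2norm u = 0 \<longleftrightarrow> u = (\<lambda>k. 0)"
  unfolding finsupp2_def by (auto simp: l2norm_eq[OF _ order_refl] L2_set_eq_0_iff supp2_def)

lemma l2norm_twone: "l2norm twone = 1"
  by (simp add: l2norm_def supp2_twone twone_eq)

lemma l2inner_self: "finsupp2 u \<Longrightarrow> l2inner u u = of_real ((l2norm u)\<^sup>2)"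
proof -
  assume u: "finsupp2 u"
  have "l2inner u u = (\<Sum>k\<in>supp2 u. complex_of_real ((cmod (u k))\<^sup>2))"
    unfolding l2inner_def by (rule sum.cong) (simp_all only: complex_norm_square)
  then show ?thesis
    using u unfolding finsupp2_def by (simp add: l2norm_eq[OF _ order_refl] L2_set_def sum_nonneg)
qed

lemma l2inner_commute: "finsupp2 u \<Longrightarrow> finsupp2 v \<Longrightarrow> l2inner v u = cnj (l2inner u v)"
  by (simp add: l2inner_eq[of "supp2 u \<union> supp2 v"] finsupp2_def cnj_sum mult.commute)

lemma l2inner_add_left:
  assumes "finsupp2 f" "finsupp2 g"
  shows "l2inner (\<lambda>k. f k + g k) v = l2inner f v + l2inner g v"
proof -
  let ?S = "supp2 f \<union> supp2 g"
  have "finite ?S" using assms by (auto simp: finsupp2_def)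
  moreover have "supp2 (\<lambda>k. f k + g k) \<subseteq> ?S" by (auto simp: supp2_def)
  ultimately show ?thesis
    by (simp add: l2inner_eq[of ?S] sum.distrib[symmetric] algebra_simps)
qed

lemma l2inner_scale_left:
  assumes "finsupp2 f" shows "l2inner (\<lambda>k. c * f k) v = c * l2inner f v"
proof -
  have "finite (supp2 f)" using assms by (simp add: finsupp2_def)
  moreover have "supp2 (\<lambda>k. c * f k) \<subseteq> supp2 f" by (auto simp: supp2_def)
  ultimately show ?thesis by (simp add: l2inner_eq[of "supp2 f"] sum_distrib_left algebra_simps)
qed

lemma l2inner_add_right: "l2inner u (\<lambda>k. f k + g k) = l2inner u f + l2inner u g"
  by (simp add: l2inner_def sum.distrib[symmetric] algebra_simps)

lemma l2inner_scale_right: "l2inner u (\<lambda>k. c * f k) = cnj c * l2inner u f"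
  by (simp add: l2inner_def sum_distrib_left algebra_simps)

lemma l2inner_cauchy_schwarz:
  assumes "finsupp2 u" "finsupp2 v"
  shows "cmod (l2inner u v) \<le> l2norm u * l2norm v"
proof -
  let ?S = "supp2 u \<union> supp2 v"
  have f: "finite ?S" using assms by (auto simp: finsupp2_def)
  have "cmod (l2inner u v) \<le> (\<Sum>k\<in>?S. \<bar>cmod (u k)\<bar> * \<bar>cmod (v k)\<bar>)"
    using norm_sum[of "\<lambda>k. u k * cnj (v k)" ?S] by (simp add: l2inner_eq[OF f] norm_mult)
  also have "\<dots> \<le> L2_set (\<lambda>k. cmod (u k)) ?S * L2_set (\<lambda>k. cmod (v k)) ?S"
    by (rule L2_set_mult_ineq)
  also have "\<dots> = l2norm u * l2norm v" by (simp add: l2norm_eq[OF f])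
  finally show ?thesis .
qed

lemma l2norm_triangle:
  assumes "finsupp2 u" "finsupp2 v"
  shows "l2norm (\<lambda>k. u k + v k) \<le> l2norm u + l2norm v"
proof -
  let ?S = "supp2 u \<union> supp2 v"
  have f: "finite ?S" using assms by (auto simp: finsupp2_def)
  have s: "supp2 (\<lambda>k. u k + v k) \<subseteq> ?S" by (auto simp: supp2_def)
  have "l2norm (\<lambda>k. u k + v k) \<le> L2_set (\<lambda>k. cmod (u k) + cmod (v k)) ?S"
    unfolding l2norm_eq[OF f s] by (rule L2_set_mono) (auto intro: norm_triangle_ineq)
  also have "\<dots> \<le> L2_set (\<lambda>k. cmod (u k)) ?S + L2_set (\<lambda>k. cmod (v k)) ?S"
    by (rule L2_set_triangle_ineq)
  also have "\<dots> = l2norm u + l2norm v" by (simp add: l2norm_eq[OF f])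
  finally show ?thesis .
qed

lemma l2norm_scale:
  assumes "finsupp2 u" shows "l2norm (\<lambda>k. c * u k) = cmod c * l2norm u"
proof -
  have "finite (supp2 u)" using assms by (simp add: finsupp2_def)
  moreover have "supp2 (\<lambda>k. c * u k) \<subseteq> supp2 u" by (auto simp: supp2_def)
  ultimately show ?thesis by (simp add: l2norm_eq[of "supp2 u"] L2_set_right_distrib norm_mult)
qed

lemma l2norm_diff:
  assumes "finsupp2 u" "finsupp2 v"
  shows "l2norm (\<lambda>k. u k - v k) \<le> l2norm u + l2norm v"
  using l2norm_triangle[OF assms(1) finsupp2_scale[OF assms(2), of "-1"]]
    l2norm_scale[OF assms(2), of "-1"] by simp

lemma l2norm_sum:
  "finite K \<Longrightarrow> (\<And>i. i \<in> K \<Longrightarrow> finsupp2 (G i)) \<Longrightarrow>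
     l2norm (\<lambda>p. \<Sum>i\<in>K. G i p) \<le> (\<Sum>i\<in>K. l2norm (G i))"
proof (induction K rule: finite_induct)
  case (insert x F)
  have "l2norm (\<lambda>p. \<Sum>i\<in>insert x F. G i p) = l2norm (\<lambda>p. G x p + (\<Sum>i\<in>F. G i p))"
    using insert by simp
  also have "\<dots> \<le> l2norm (G x) + l2norm (\<lambda>p. \<Sum>i\<in>F. G i p)"
    using insert by (intro l2norm_triangle finsupp2_sum) auto
  also have "\<dots> \<le> l2norm (G x) + (\<Sum>i\<in>F. l2norm (G i))" using insert by simp
  finally show ?case using insert by simp
qed simp

lemma l2norm_translate:
  assumes "finsupp2 \<xi>" "\<And>p. cmod (c p) = 1"
  shows "l2norm (\<lambda>p. \<xi> (p - k) * c p) = l2norm \<xi>"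
proof -
  have f: "finite (supp2 \<xi>)" using assms by (auto simp: finsupp2_def)
  have s: "supp2 (\<lambda>p. \<xi> (p - k) * c p) \<subseteq> (+) k ` supp2 \<xi>"
  proof (rule supp2_subsetI)
    fix p assume "\<xi> (p - k) * c p \<noteq> 0"
    then have "p - k \<in> supp2 \<xi>" by (simp add: supp2_def)
    then show "p \<in> (+) k ` supp2 \<xi>" by (rule rev_image_eqI) simp
  qed
  have "(\<Sum>p\<in>(+) k ` supp2 \<xi>. (cmod (\<xi> (p - k) * c p))\<^sup>2) = (\<Sum>q\<in>supp2 \<xi>. (cmod (\<xi> q))\<^sup>2)"
    by (simp add: sum.reindex inj_on_def norm_mult assms(2))
  then show ?thesis
    using f by (simp add: l2norm_eq[OF _ s] l2norm_eq[OF f order_refl] L2_set_def)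
qed

definition twphase :: "real \<Rightarrow> int \<times> int \<Rightarrow> int \<times> int \<Rightarrow> complex" where
  "twphase \<theta> k p = cis (- 2 * pi * \<theta> * of_int (snd k * (fst p - fst k)))"

lemma norm_twphase [simp]: "cmod (twphase \<theta> k p) = 1"
  by (simp add: twphase_def)

lemma twphase_zero_left [simp]: "twphase \<theta> 0 p = 1"
  by (simp add: twphase_def)

lemma twphase_cocycle: "twphase \<theta> k (k + l) * twphase \<theta> (k + l) p = twphase \<theta> l (p - k) * twphase \<theta> k p"
  unfolding twphase_def cis_mult by (rule arg_cong[where f=cis]) (simp add: algebra_simps)

lemma twprod_eq:
  assumes "finite S" "supp2 f \<subseteq> S"
  shows "twprod \<theta> f g p = (\<Sum>k\<in>S. f k * g (p - k) * twphase \<theta> k p)"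
proof -
  have "twprod \<theta> f g p = (\<Sum>k\<in>supp2 f. f k * g (p - k) * twphase \<theta> k p)"
    by (cases p) (simp add: twprod_def twphase_def split_def minus_prod_def)
  also have "\<dots> = (\<Sum>k\<in>S. f k * g (p - k) * twphase \<theta> k p)"
    using assms by (intro sum.mono_neutral_left) (auto simp: supp2_def)
  finally show ?thesis .
qed

lemma supp2_twprod:
  assumes "finsupp2 f"
  shows "supp2 (twprod \<theta> f g) \<subseteq> (\<lambda>(k, l). k + l) ` (supp2 f \<times> supp2 g)"
proof (rule supp2_subsetI)
  fix p assume "twprod \<theta> f g p \<noteq> 0"
  then have "(\<Sum>k\<in>supp2 f. f k * g (p - k) * twphase \<theta> k p) \<noteq> 0"
    using assms by (simp add: twprod_eq[OF _ order_refl] finsupp2_def)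
  then obtain k where "k \<in> supp2 f" "f k * g (p - k) * twphase \<theta> k p \<noteq> 0"
    by (meson sum.neutral)
  then show "p \<in> (\<lambda>(k, l). k + l) ` (supp2 f \<times> supp2 g)"
    by (intro rev_image_eqI[of "(k, p - k)"]) (auto simp: supp2_def)
qed

lemma finsupp2_twprod [intro]: "finsupp2 f \<Longrightarrow> finsupp2 g \<Longrightarrow> finsupp2 (twprod \<theta> f g)"
  unfolding finsupp2_def by (rule finite_subset[OF supp2_twprod]) (auto simp: finsupp2_def)

lemma twprod_zero_left: "twprod \<theta> (\<lambda>k. 0) g = (\<lambda>k. 0)"
  by (auto simp: twprod_def supp2_def fun_eq_iff)

lemma twprod_zero_right: "twprod \<theta> f (\<lambda>k. 0) = (\<lambda>k. 0)"
  by (auto simp: twprod_def fun_eq_iff)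

lemma twprod_add_left:
  assumes "finsupp2 f" "finsupp2 g"
  shows "twprod \<theta> (\<lambda>k. f k + g k) h = (\<lambda>p. twprod \<theta> f h p + twprod \<theta> g h p)"
proof -
  let ?S = "supp2 f \<union> supp2 g"
  have "finite ?S" using assms by (auto simp: finsupp2_def)
  moreover have "supp2 (\<lambda>k. f k + g k) \<subseteq> ?S" by (auto simp: supp2_def)
  ultimately show ?thesis
    by (simp add: twprod_eq[of ?S] fun_eq_iff sum.distrib[symmetric] algebra_simps)
qed

lemma twprod_diff_left:
  assumes "finsupp2 f" "finsupp2 g"
  shows "twprod \<theta> (\<lambda>k. f k - g k) h = (\<lambda>p. twprod \<theta> f h p - twprod \<theta> g h p)"
proof -
  let ?S = "supp2 f \<union> supp2 g"
  have "finite ?S" using assms by (auto simp: finsupp2_def)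
  moreover have "supp2 (\<lambda>k. f k - g k) \<subseteq> ?S" by (auto simp: supp2_def)
  ultimately show ?thesis
    by (simp add: twprod_eq[of ?S] fun_eq_iff sum_subtractf[symmetric] algebra_simps)
qed

lemma twprod_scale_left:
  assumes "finsupp2 f"
  shows "twprod \<theta> (\<lambda>k. c * f k) h = (\<lambda>p. c * twprod \<theta> f h p)"
proof -
  have "finite (supp2 f)" using assms by (auto simp: finsupp2_def)
  moreover have "supp2 (\<lambda>k. c * f k) \<subseteq> supp2 f" by (auto simp: supp2_def)
  ultimately show ?thesis
    by (simp add: twprod_eq[of "supp2 f"] fun_eq_iff sum_distrib_left algebra_simps)
qed

lemma twprod_add_right: "twprod \<theta> f (\<lambda>k. g k + h k) = (\<lambda>p. twprod \<theta> f g p + twprod \<theta> f h p)"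
  by (simp add: twprod_def fun_eq_iff sum.distrib[symmetric] algebra_simps split_def)

lemma twprod_diff_right: "twprod \<theta> f (\<lambda>k. g k - h k) = (\<lambda>p. twprod \<theta> f g p - twprod \<theta> f h p)"
  by (simp add: twprod_def fun_eq_iff sum_subtractf[symmetric] algebra_simps split_def)

lemma twprod_scale_right: "twprod \<theta> f (\<lambda>k. c * g k) = (\<lambda>p. c * twprod \<theta> f g p)"
  by (simp add: twprod_def fun_eq_iff sum_distrib_left algebra_simps split_def)

lemma twprod_one_left: "twprod \<theta> twone g = g"
  by (simp add: fun_eq_iff twprod_eq[of "{0}"] supp2_twone twone_eq)

lemma twprod_one_right:
  assumes "finsupp2 f"
  shows "twprod \<theta> f twone = f"
proof
  fix p
  have fin: "finite (insert p (supp2 f))" using assms by (auto simp: finsupp2_def)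
  have "twone (p - k) = (if p = k then 1 else 0)" for k
    unfolding twone_eq by (metis eq_iff_diff_eq_0)
  then have "twprod \<theta> f twone p = (\<Sum>k\<in>insert p (supp2 f). if p = k then f k * twphase \<theta> k p else 0)"
    unfolding twprod_eq[OF fin subset_insertI] by (intro sum.cong) simp_all
  also have "\<dots> = f p" using fin by (simp add: sum.delta' twphase_def)
  finally show "twprod \<theta> f twone p = f p" .
qed

lemma twprod_twprod_eq:
  assumes f: "finsupp2 f" and g: "finsupp2 g"
  shows "twprod \<theta> (twprod \<theta> f g) h p = (\<Sum>k\<in>supp2 f. \<Sum>l\<in>supp2 g.
           f k * g l * h (p - k - l) * (twphase \<theta> k (k + l) * twphase \<theta> (k + l) p))"
proof -
  let ?Sf = "supp2 f" and ?Sg = "supp2 g"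
  let ?Sfg = "(\<lambda>(k, l). k + l) ` (?Sf \<times> ?Sg)"
  have fSf: "finite ?Sf" and fSfg: "finite ?Sfg" using f g by (auto simp: finsupp2_def)
  have "twprod \<theta> (twprod \<theta> f g) h p =
      (\<Sum>j\<in>?Sfg. \<Sum>k\<in>?Sf. g (j - k) * (f k * twphase \<theta> k j * h (p - j) * twphase \<theta> j p))"
    by (simp add: twprod_eq[OF fSfg supp2_twprod[OF f]] twprod_eq[OF fSf] sum_distrib_left
        sum_distrib_right mult_ac)
  also have "\<dots> = (\<Sum>k\<in>?Sf. \<Sum>j\<in>?Sfg. g (j - k) * (f k * twphase \<theta> k j * h (p - j) * twphase \<theta> j p))"
    by (rule sum.swap)
  also have "\<dots> = (\<Sum>k\<in>?Sf. \<Sum>l\<in>?Sg.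
      g l * (f k * twphase \<theta> k (k + l) * h (p - (k + l)) * twphase \<theta> (k + l) p))"
    by (intro sum.cong refl sum_translate_supp2 fSfg) force
  finally show ?thesis by (simp add: diff_diff_eq mult_ac)
qed

lemma twprod_assoc:
  assumes f: "finsupp2 f" and g: "finsupp2 g"
  shows "twprod \<theta> (twprod \<theta> f g) h = twprod \<theta> f (twprod \<theta> g h)"
proof
  fix p
  have fSf: "finite (supp2 f)" and fSg: "finite (supp2 g)" using f g by (auto simp: finsupp2_def)
  have "twprod \<theta> (twprod \<theta> f g) h p = (\<Sum>k\<in>supp2 f. \<Sum>l\<in>supp2 g.
      f k * g l * h (p - k - l) * (twphase \<theta> l (p - k) * twphase \<theta> k p))"
    by (simp only: twprod_twprod_eq[OF f g] twphase_cocycle)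
  also have "\<dots> = (\<Sum>k\<in>supp2 f. f k *
      (\<Sum>l\<in>supp2 g. g l * h (p - k - l) * twphase \<theta> l (p - k)) * twphase \<theta> k p)"
    by (simp add: sum_distrib_left sum_distrib_right mult_ac)
  also have "\<dots> = twprod \<theta> f (twprod \<theta> g h) p"
    by (simp add: twprod_eq[OF fSf] twprod_eq[OF fSg] diff_diff_eq)
  finally show "twprod \<theta> (twprod \<theta> f g) h p = twprod \<theta> f (twprod \<theta> g h) p" .
qed

lemma l2norm_twprod_le_l1norm:
  assumes f: "finsupp2 f" and x: "finsupp2 \<xi>"
  shows "l2norm (twprod \<theta> f \<xi>) \<le> l1norm f * l2norm \<xi>"
proof -
  have fS: "finite (supp2 f)" using f by (auto simp: finsupp2_def)
  have "twprod \<theta> f \<xi> = (\<lambda>p. \<Sum>k\<in>supp2 f. f k * (\<xi> (p - k) * twphase \<theta> k p))"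
    by (simp add: fun_eq_iff twprod_eq[OF fS order_refl] mult.assoc)
  then have "l2norm (twprod \<theta> f \<xi>) = l2norm (\<lambda>p. \<Sum>k\<in>supp2 f. f k * (\<xi> (p - k) * twphase \<theta> k p))"
    by simp
  also have "\<dots> \<le> (\<Sum>k\<in>supp2 f. l2norm (\<lambda>p. f k * (\<xi> (p - k) * twphase \<theta> k p)))"
    using x by (intro l2norm_sum[OF fS]) auto
  also have "\<dots> = (\<Sum>k\<in>supp2 f. cmod (f k) * l2norm \<xi>)"
    using x by (intro sum.cong refl) (simp add: l2norm_scale l2norm_translate finsupp2_translate)
  also have "\<dots> = l1norm f * l2norm \<xi>" by (simp add: l1norm_def sum_distrib_right)
  finally show ?thesis .
qed

lemma twnorm_upper:
  assumes f: "finsupp2 f" and "finsupp2 \<xi>" "l2norm \<xi> \<le> 1"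
  shows "l2norm (twprod \<theta> f \<xi>) \<le> twnorm \<theta> f"
  unfolding twnorm_def
proof (rule cSup_upper)
  show "bdd_above {l2norm (twprod \<theta> f \<xi>) | \<xi>. finsupp2 \<xi> \<and> l2norm \<xi> \<le> 1}"
  proof (rule bdd_aboveI)
    fix y assume "y \<in> {l2norm (twprod \<theta> f \<xi>) | \<xi>. finsupp2 \<xi> \<and> l2norm \<xi> \<le> 1}"
    then obtain \<eta> where "y = l2norm (twprod \<theta> f \<eta>)" "finsupp2 \<eta>" "l2norm \<eta> \<le> 1" by blast
    then show "y \<le> l1norm f"
      using l2norm_twprod_le_l1norm[where \<theta>=\<theta>, OF f, of \<eta>] mult_left_mono[of "l2norm \<eta>" 1 "l1norm f"]
      by (simp add: l1norm_nonneg)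
  qed
qed (use assms in blast)

lemma twnorm_nonneg: "finsupp2 f \<Longrightarrow> 0 \<le> twnorm \<theta> f"
  using twnorm_upper[OF _ finsupp2_zero, of f] by (simp add: twprod_zero_right)

lemma l2norm_twprod_le:
  assumes f: "finsupp2 f" and x: "finsupp2 \<xi>"
  shows "l2norm (twprod \<theta> f \<xi>) \<le> twnorm \<theta> f * l2norm \<xi>"
proof (cases "l2norm \<xi> = 0")
  case True
  then show ?thesis
    using l2norm_zero_iff[OF x] by (simp add: twprod_zero_right)
next
  case False
  then have pos: "l2norm \<xi> > 0" using l2norm_nonneg[of \<xi>] by linarith
  let ?c = "complex_of_real (1 / l2norm \<xi>)"
  have "l2norm (\<lambda>k. ?c * \<xi> k) = 1"
    using pos by (subst l2norm_scale[OF x]) (simp add: norm_divide)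
  then have "l2norm (twprod \<theta> f (\<lambda>k. ?c * \<xi> k)) \<le> twnorm \<theta> f"
    using x by (intro twnorm_upper f finsupp2_scale) simp_all
  moreover have "l2norm (twprod \<theta> f (\<lambda>k. ?c * \<xi> k)) = l2norm (twprod \<theta> f \<xi>) / l2norm \<xi>"
    unfolding twprod_scale_right using pos
    by (subst l2norm_scale[OF finsupp2_twprod[OF f x]]) (simp add: norm_divide)
  ultimately show ?thesis using pos by (simp add: divide_le_eq mult.commute)
qed

lemma twnorm_leI:
  assumes f: "finsupp2 f" and C: "0 \<le> C"
    and bound: "\<And>\<xi>. finsupp2 \<xi> \<Longrightarrow> l2norm (twprod \<theta> f \<xi>) \<le> C * l2norm \<xi>"
  shows "twnorm \<theta> f \<le> C"
  unfolding twnorm_def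
proof (rule cSup_least)
  show "{l2norm (twprod \<theta> f \<xi>) | \<xi>. finsupp2 \<xi> \<and> l2norm \<xi> \<le> 1} \<noteq> {}"
    using finsupp2_zero l2norm_zero by fastforce
  fix y assume "y \<in> {l2norm (twprod \<theta> f \<xi>) | \<xi>. finsupp2 \<xi> \<and> l2norm \<xi> \<le> 1}"
  then obtain \<xi> where "y = l2norm (twprod \<theta> f \<xi>)" "finsupp2 \<xi>" "l2norm \<xi> \<le> 1" by blast
  then show "y \<le> C" using bound[of \<xi>] mult_left_mono[of "l2norm \<xi>" 1 C] C by simp
qed

lemma twnorm_le_l1norm: "finsupp2 f \<Longrightarrow> twnorm \<theta> f \<le> l1norm f"
  by (rule twnorm_leI[OF _ l1norm_nonneg]) (auto intro: l2norm_twprod_le_l1norm)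

lemma twnorm_twone: "twnorm \<theta> twone \<le> 1"
  by (rule twnorm_leI) (auto simp: twprod_one_left)

lemma twnorm_add:
  assumes f: "finsupp2 f" and g: "finsupp2 g"
  shows "twnorm \<theta> (\<lambda>k. f k + g k) \<le> twnorm \<theta> f + twnorm \<theta> g"
proof (rule twnorm_leI)
  fix \<xi> assume x: "finsupp2 \<xi>"
  have "l2norm (twprod \<theta> (\<lambda>k. f k + g k) \<xi>) \<le> l2norm (twprod \<theta> f \<xi>) + l2norm (twprod \<theta> g \<xi>)"
    using f g x by (simp add: twprod_add_left l2norm_triangle finsupp2_twprod)
  also have "\<dots> \<le> (twnorm \<theta> f + twnorm \<theta> g) * l2norm \<xi>"
    unfolding distrib_right by (intro add_mono l2norm_twprod_le f g x)
  finally show "l2norm (twprod \<theta> (\<lambda>k. f k + g k) \<xi>) \<le> (twnorm \<theta> f + twnorm \<theta> g) * l2norm \<xi>" .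
qed (use f g twnorm_nonneg in auto)

lemma twnorm_scale:
  assumes f: "finsupp2 f"
  shows "twnorm \<theta> (\<lambda>k. c * f k) \<le> cmod c * twnorm \<theta> f"
proof (rule twnorm_leI)
  fix \<xi> assume x: "finsupp2 \<xi>"
  have "l2norm (twprod \<theta> (\<lambda>k. c * f k) \<xi>) = cmod c * l2norm (twprod \<theta> f \<xi>)"
    using f x by (simp add: twprod_scale_left l2norm_scale finsupp2_twprod)
  also have "\<dots> \<le> cmod c * twnorm \<theta> f * l2norm \<xi>"
    unfolding mult.assoc by (intro mult_left_mono l2norm_twprod_le f x) simp
  finally show "l2norm (twprod \<theta> (\<lambda>k. c * f k) \<xi>) \<le> cmod c * twnorm \<theta> f * l2norm \<xi>" .
qed (use f twnorm_nonneg in auto)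

lemma twnorm_uminus: "finsupp2 f \<Longrightarrow> twnorm \<theta> (\<lambda>k. - f k) \<le> twnorm \<theta> f"
  using twnorm_scale[where \<theta>=\<theta> and f=f and c="-1"] by simp

lemma twnorm_diff:
  assumes f: "finsupp2 f" and g: "finsupp2 g"
  shows "twnorm \<theta> (\<lambda>k. f k - g k) \<le> twnorm \<theta> f + twnorm \<theta> g"
  using twnorm_add[where \<theta>=\<theta>, OF f finsupp2_scale[OF g, of "-1"]] twnorm_uminus[where \<theta>=\<theta>, OF g] by simp

lemma twnorm_twprod:
  assumes f: "finsupp2 f" and g: "finsupp2 g"
  shows "twnorm \<theta> (twprod \<theta> f g) \<le> twnorm \<theta> f * twnorm \<theta> g"
proof (rule twnorm_leI)
  fix \<xi> assume x: "finsupp2 \<xi>"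
  have "l2norm (twprod \<theta> (twprod \<theta> f g) \<xi>) = l2norm (twprod \<theta> f (twprod \<theta> g \<xi>))"
    by (simp add: twprod_assoc[OF f g])
  also have "\<dots> \<le> twnorm \<theta> f * l2norm (twprod \<theta> g \<xi>)"
    using g x by (intro l2norm_twprod_le f) auto
  also have "\<dots> \<le> twnorm \<theta> f * twnorm \<theta> g * l2norm \<xi>"
    unfolding mult.assoc by (intro mult_left_mono l2norm_twprod_le g x twnorm_nonneg f)
  finally show "l2norm (twprod \<theta> (twprod \<theta> f g) \<xi>) \<le> twnorm \<theta> f * twnorm \<theta> g * l2norm \<xi>" .
qed (use f g twnorm_nonneg in auto)

primrec twpow :: "real \<Rightarrow> coeffs \<Rightarrow> nat \<Rightarrow> coeffs" where
  "twpow \<theta> T 0 = twone"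
| "twpow \<theta> T (Suc n) = twprod \<theta> T (twpow \<theta> T n)"

primrec twgeom :: "real \<Rightarrow> coeffs \<Rightarrow> nat \<Rightarrow> coeffs" where
  "twgeom \<theta> T 0 = (\<lambda>k. 0)"
| "twgeom \<theta> T (Suc n) = (\<lambda>k. twgeom \<theta> T n k + twpow \<theta> T n k)"

lemma finsupp2_twpow [intro]: "finsupp2 T \<Longrightarrow> finsupp2 (twpow \<theta> T n)"
  by (induction n) auto

lemma finsupp2_twgeom [intro]: "finsupp2 T \<Longrightarrow> finsupp2 (twgeom \<theta> T n)"
  by (induction n) auto

lemma twnorm_twpow: "finsupp2 T \<Longrightarrow> twnorm \<theta> (twpow \<theta> T n) \<le> twnorm \<theta> T ^ n"
proof (induction n)
  case 0 then show ?case using twnorm_twone by simp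
next
  case (Suc n)
  have "twnorm \<theta> (twpow \<theta> T (Suc n)) \<le> twnorm \<theta> T * twnorm \<theta> (twpow \<theta> T n)"
    using Suc.prems by (simp add: twnorm_twprod finsupp2_twpow)
  also have "\<dots> \<le> twnorm \<theta> T * twnorm \<theta> T ^ n"
    using Suc by (intro mult_left_mono twnorm_nonneg) auto
  finally show ?case by simp
qed

lemma twpow_Suc_right: "finsupp2 T \<Longrightarrow> twprod \<theta> (twpow \<theta> T n) T = twpow \<theta> T (Suc n)"
  by (induction n) (simp_all add: twprod_one_left twprod_one_right twprod_assoc finsupp2_twpow)

lemma twprod_twgeom_left:
  "twprod \<theta> T (twgeom \<theta> T n) = (\<lambda>k. twgeom \<theta> T (Suc n) k - twone k)"
  by (induction n) (simp_all add: twprod_zero_right twprod_add_right fun_eq_iff)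

lemma twprod_twgeom_right:
  "finsupp2 T \<Longrightarrow> twprod \<theta> (twgeom \<theta> T n) T = (\<lambda>k. twgeom \<theta> T (Suc n) k - twone k)"
  by (induction n) (simp_all add: twprod_zero_left twprod_add_left finsupp2_twgeom finsupp2_twpow
      twpow_Suc_right fun_eq_iff)

lemma twnorm_twgeom_diff_le:
  assumes T: "finsupp2 T" and q: "twnorm \<theta> T < 1"
  shows "twnorm \<theta> (\<lambda>k. twgeom \<theta> T (j + d) k - twgeom \<theta> T j k) \<le> twnorm \<theta> T ^ j / (1 - twnorm \<theta> T)"
proof -
  let ?q = "twnorm \<theta> T"
  have q0: "0 \<le> ?q" by (rule twnorm_nonneg[OF T])
  have "twnorm \<theta> (\<lambda>k. twgeom \<theta> T (j + d) k - twgeom \<theta> T j k) \<le> (\<Sum>l<d. ?q ^ (j + l))"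
  proof (induction d)
    case 0
    then show ?case using twnorm_nonneg[OF finsupp2_zero] twnorm_leI[OF finsupp2_zero order_refl]
      by (simp add: twprod_zero_left)
  next
    case (Suc d)
    have "twnorm \<theta> (\<lambda>k. twgeom \<theta> T (j + Suc d) k - twgeom \<theta> T j k)
        = twnorm \<theta> (\<lambda>k. (twgeom \<theta> T (j + d) k - twgeom \<theta> T j k) + twpow \<theta> T (j + d) k)"
      by (simp add: algebra_simps)
    also have "\<dots> \<le> twnorm \<theta> (\<lambda>k. twgeom \<theta> T (j + d) k - twgeom \<theta> T j k) + twnorm \<theta> (twpow \<theta> T (j + d))"
      using T by (intro twnorm_add) auto
    also have "\<dots> \<le> (\<Sum>l<d. ?q ^ (j + l)) + ?q ^ (j + d)"
      by (intro add_mono Suc.IH twnorm_twpow T)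
    finally show ?case by simp
  qed
  also have "\<dots> = ?q ^ j * (\<Sum>l<d. ?q ^ l)"
    by (simp add: power_add sum_distrib_left)
  also have "\<dots> \<le> ?q ^ j * (1 / (1 - ?q))"
    using sum_le_suminf[OF summable_geometric[of ?q], of "{..<d}"] q q0 suminf_geometric[of ?q]
    by (intro mult_left_mono) simp_all
  finally show ?thesis by simp
qed

lemma twnorm_Cauchy_if_increments_le:
  assumes y: "\<And>k. finsupp2 (y k)"
    and incr: "\<And>j d. twnorm \<theta> (y (j + d) - y j) \<le> B j" and B: "B \<longlonglongrightarrow> 0"
  shows "\<forall>e>0. \<exists>N. \<forall>i\<ge>N. \<forall>j\<ge>N. twnorm \<theta> (y i - y j) < e"
proof (intro allI impI)
  fix e :: real assume "e > 0"
  then obtain N where N: "\<And>j. j \<ge> N \<Longrightarrow> B j < e"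
    using order_tendstoD(2)[OF B] unfolding eventually_sequentially by blast
  have "twnorm \<theta> (y i - y j) < e" if "i \<ge> N" "j \<ge> N" "j \<le> i" for i j
    using incr[of j "i - j"] N[of j] that by simp
  moreover have "twnorm \<theta> (y i - y j) \<le> twnorm \<theta> (y j - y i)" for i j
    using twnorm_uminus[OF finsupp2_minus[OF y y, of j i]] by (simp add: fun_diff_def)
  ultimately show "\<exists>N. \<forall>i\<ge>N. \<forall>j\<ge>N. twnorm \<theta> (y i - y j) < e"
    by (meson le_less_trans nat_le_linear)
qed

lemma twprod_twgeom_defect:
  assumes x: "finsupp2 x" and c: "c \<noteq> 0" and T: "T = (\<lambda>k. twone k - complex_of_real c * x k)"
  shows "twprod \<theta> x (\<lambda>k. complex_of_real c * twgeom \<theta> T n k) - twone = (\<lambda>k. - twpow \<theta> T n k)"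
    and "twprod \<theta> (\<lambda>k. complex_of_real c * twgeom \<theta> T n k) x - twone = (\<lambda>k. - twpow \<theta> T n k)"
proof -
  have fT: "finsupp2 T" unfolding T using x by auto
  have f1: "finsupp2 (\<lambda>k. twone k - T k)" using fT by auto
  have x_eq: "x = (\<lambda>k. complex_of_real (1 / c) * (twone k - T k))"
    using c by (auto simp: T fun_eq_iff field_simps)
  have "twprod \<theta> x (\<lambda>k. complex_of_real c * twgeom \<theta> T n k) = (\<lambda>p. complex_of_real c *
      (complex_of_real (1 / c) * (twprod \<theta> twone (twgeom \<theta> T n) p - twprod \<theta> T (twgeom \<theta> T n) p)))"
    unfolding twprod_scale_right
    by (subst x_eq, subst twprod_scale_left[OF f1], subst twprod_diff_left[OF finsupp2_twone fT]) simp
  then show "twprod \<theta> x (\<lambda>k. complex_of_real c * twgeom \<theta> T n k) - twone = (\<lambda>k. - twpow \<theta> T n k)"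
    using c by (simp add: fun_eq_iff twprod_one_left twprod_twgeom_left)
  have "twprod \<theta> (\<lambda>k. complex_of_real c * twgeom \<theta> T n k) x = (\<lambda>p. complex_of_real (1 / c) *
      (complex_of_real c * (twprod \<theta> (twgeom \<theta> T n) twone p - twprod \<theta> (twgeom \<theta> T n) T p)))"
    unfolding twprod_scale_left[OF finsupp2_twgeom[OF fT]]
    by (subst x_eq, subst twprod_scale_right, subst twprod_diff_right) simp
  then show "twprod \<theta> (\<lambda>k. complex_of_real c * twgeom \<theta> T n k) x - twone = (\<lambda>k. - twpow \<theta> T n k)"
    using c fT by (simp add: fun_eq_iff twprod_one_right[OF finsupp2_twgeom[OF fT]] twprod_twgeom_right)
qed

lemma twnorm_twpow_tendsto_0:
  assumes T: "finsupp2 T" and q: "twnorm \<theta> T < 1"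
  shows "(\<lambda>n. twnorm \<theta> (\<lambda>k. - twpow \<theta> T n k)) \<longlonglongrightarrow> 0"
proof (rule tendsto_sandwich[where f="\<lambda>_. 0" and h="\<lambda>n. twnorm \<theta> T ^ n"])
  show "\<forall>\<^sub>F n in sequentially. 0 \<le> twnorm \<theta> (\<lambda>k. - twpow \<theta> T n k)"
    using T by (intro always_eventually allI twnorm_nonneg) auto
  show "\<forall>\<^sub>F n in sequentially. twnorm \<theta> (\<lambda>k. - twpow \<theta> T n k) \<le> twnorm \<theta> T ^ n"
    using T by (intro always_eventually allI order_trans[OF twnorm_uminus twnorm_twpow]) auto
qed (use q twnorm_nonneg[OF T] in \<open>auto intro: LIMSEQ_power_zero\<close>)

lemma tw_invertible_neumann:
  assumes x: "finsupp2 x" and c: "c > 0" and T: "T = (\<lambda>k. twone k - complex_of_real c * x k)"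
    and q: "twnorm \<theta> T < 1"
  shows "tw_invertible \<theta> x"
proof -
  let ?q = "twnorm \<theta> T"
  have fT: "finsupp2 T" unfolding T using x by auto
  have q0: "0 \<le> ?q" by (rule twnorm_nonneg[OF fT])
  \<comment> \<open>The approximate inverses are \<open>c (1 + T + \<dots> + T\<^sup>n\<^sup>-\<^sup>1)\<close>; the defects on both sides are \<open>- T\<^sup>n\<close>.\<close>
  define y where "y n = (\<lambda>k. complex_of_real c * twgeom \<theta> T n k)" for n
  have fy: "finsupp2 (y n)" for n unfolding y_def using fT by auto
  have "\<forall>e>0. \<exists>N. \<forall>i\<ge>N. \<forall>j\<ge>N. twnorm \<theta> (y i - y j) < e"
  proof (rule twnorm_Cauchy_if_increments_le[OF fy])
    show "twnorm \<theta> (y (j + d) - y j) \<le> c * (?q ^ j / (1 - ?q))" for j d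
    proof -
      have "y (j + d) - y j = (\<lambda>k. complex_of_real c * (twgeom \<theta> T (j + d) k - twgeom \<theta> T j k))"
        by (simp add: y_def fun_eq_iff algebra_simps)
      then have "twnorm \<theta> (y (j + d) - y j) \<le> c * twnorm \<theta> (\<lambda>k. twgeom \<theta> T (j + d) k - twgeom \<theta> T j k)"
        using c fT twnorm_scale[where f="\<lambda>k. twgeom \<theta> T (j + d) k - twgeom \<theta> T j k" and c="complex_of_real c"]
        by auto
      also have "\<dots> \<le> c * (?q ^ j / (1 - ?q))"
        using c by (intro mult_left_mono twnorm_twgeom_diff_le fT q) simp
      finally show ?thesis .
    qed
    show "(\<lambda>j. c * (?q ^ j / (1 - ?q))) \<longlonglongrightarrow> 0"
      using tendsto_mult[OF tendsto_const tendsto_divide[OF LIMSEQ_power_zero tendsto_const],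
          of ?q "1 - ?q" c] q q0 by simp
  qed
  then show ?thesis
    unfolding tw_invertible_def using fy c twprod_twgeom_defect[OF x _ T] twnorm_twpow_tendsto_0[OF fT q]
    by (intro exI[of _ y]) (simp add: y_def)
qed

lemma twstar_eq: "twstar \<theta> f k = cnj (f (- k)) * cis (- 2 * pi * \<theta> * of_int (fst k * snd k))"
  by (cases k) (simp add: twstar_def)

lemma supp2_twstar: "supp2 (twstar \<theta> f) \<subseteq> uminus ` supp2 f"
proof (rule supp2_subsetI)
  fix k assume "twstar \<theta> f k \<noteq> 0"
  then have "- k \<in> supp2 f" by (auto simp: twstar_eq supp2_def)
  then show "k \<in> uminus ` supp2 f" by (rule rev_image_eqI) simp
qed

abbreviation qform :: "real \<Rightarrow> coeffs \<Rightarrow> coeffs \<Rightarrow> real" where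
  "qform \<theta> f \<xi> \<equiv> Re (l2inner (twprod \<theta> f \<xi>) \<xi>)"

lemma twphase_adjoint:
  "twphase \<theta> k (k + j) = cnj (cis (- 2 * pi * \<theta> * of_int (fst k * snd k)) * twphase \<theta> (- k) j)"
  unfolding twphase_def complex_cnj_mult cis_cnj cis_mult
  by (rule arg_cong[where f=cis]) (simp add: algebra_simps)

lemma twprod_adjoint:
  assumes f: "finsupp2 f" and x: "finsupp2 \<xi>" and e: "finsupp2 \<eta>"
  shows "l2inner (twprod \<theta> f \<xi>) \<eta> = l2inner \<xi> (twprod \<theta> (twstar \<theta> f) \<eta>)"
proof -
  let ?Sf = "supp2 f" and ?Sx = "supp2 \<xi>"
  let ?S = "supp2 \<eta> \<union> (\<lambda>(k, l). k + l) ` (?Sf \<times> ?Sx)"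
  have fSf: "finite ?Sf" and fS: "finite ?S" using f x e by (auto simp: finsupp2_def)
  have "l2inner (twprod \<theta> f \<xi>) \<eta> = (\<Sum>p\<in>?S. \<Sum>k\<in>?Sf. \<xi> (p - k) * (f k * twphase \<theta> k p * cnj (\<eta> p)))"
    unfolding l2inner_eq_right[OF finsupp2_twprod[OF f x] fS Un_upper1] twprod_eq[OF fSf order_refl]
    by (simp add: sum_distrib_left mult_ac)
  also have "\<dots> = (\<Sum>k\<in>?Sf. \<Sum>p\<in>?S. \<xi> (p - k) * (f k * twphase \<theta> k p * cnj (\<eta> p)))"
    by (rule sum.swap)
  also have "\<dots> = (\<Sum>k\<in>?Sf. \<Sum>j\<in>?Sx. \<xi> j * (f k * twphase \<theta> k (k + j) * cnj (\<eta> (k + j))))"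
    by (intro sum.cong refl sum_translate_supp2 fS) force
  also have "\<dots> = (\<Sum>j\<in>?Sx. \<Sum>k\<in>?Sf. \<xi> j * cnj (twstar \<theta> f (- k) * \<eta> (j + k) * twphase \<theta> (- k) j))"
    unfolding sum.swap[of _ ?Sf] by (intro sum.cong refl) (simp add: twstar_eq twphase_adjoint add.commute)
  also have "\<dots> = (\<Sum>j\<in>?Sx. \<xi> j * cnj (\<Sum>l\<in>uminus ` ?Sf. twstar \<theta> f l * \<eta> (j - l) * twphase \<theta> l j))"
    by (simp add: sum.reindex inj_on_def cnj_sum sum_distrib_left)
  also have "\<dots> = l2inner \<xi> (twprod \<theta> (twstar \<theta> f) \<eta>)"
    using fSf by (simp add: l2inner_def twprod_eq[OF _ supp2_twstar])
  finally show ?thesis .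
qed

lemma twprod_hermitian:
  assumes f: "finsupp2 f" and sa: "twstar \<theta> f = f" and x: "finsupp2 \<xi>" and e: "finsupp2 \<eta>"
  shows "l2inner (twprod \<theta> f \<xi>) \<eta> = cnj (l2inner (twprod \<theta> f \<eta>) \<xi>)"
  using twprod_adjoint[OF f x e] sa l2inner_commute[OF finsupp2_twprod[OF f e] x] by simp

lemma qform_add_scale:
  assumes f: "finsupp2 f" and sa: "twstar \<theta> f = f" and u: "finsupp2 u" and v: "finsupp2 v"
  shows "qform \<theta> f (\<lambda>k. u k + s * v k) = qform \<theta> f u + 2 * Re (cnj s * l2inner (twprod \<theta> f u) v)
           + (cmod s)\<^sup>2 * qform \<theta> f v"
proof -
  let ?\<beta> = "l2inner (twprod \<theta> f u) v"
  have fu: "finsupp2 (twprod \<theta> f u)" and fv: "finsupp2 (twprod \<theta> f v)" using f u v by auto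
  have "l2inner (twprod \<theta> f (\<lambda>k. u k + s * v k)) (\<lambda>k. u k + s * v k) =
      l2inner (twprod \<theta> f u) u + (cnj s * ?\<beta> + cnj (cnj s * ?\<beta>)) + (s * cnj s) * l2inner (twprod \<theta> f v) v"
    using fu fv by (simp add: twprod_add_right twprod_scale_right l2inner_add_left[OF fu finsupp2_scale[OF fv]]
        l2inner_scale_left l2inner_add_right l2inner_scale_right twprod_hermitian[OF f sa v u] algebra_simps)
  then show ?thesis by (simp flip: complex_norm_square)
qed

lemma hermitian_form_cauchy_schwarz:
  assumes f: "finsupp2 f" and sa: "twstar \<theta> f = f" and pos: "\<And>w. finsupp2 w \<Longrightarrow> 0 \<le> qform \<theta> f w"
    and u: "finsupp2 u" and v: "finsupp2 v"
  shows "(cmod (l2inner (twprod \<theta> f u) v))\<^sup>2 \<le> qform \<theta> f u * qform \<theta> f v"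
proof (rule le_mult_if_quadratic_nonneg)
  let ?\<beta> = "l2inner (twprod \<theta> f u) v"
  fix t :: real
  have "qform \<theta> f (\<lambda>k. u k + complex_of_real t * ?\<beta> * v k) =
      qform \<theta> f u + 2 * t * (cmod ?\<beta>)\<^sup>2 + t\<^sup>2 * (cmod ?\<beta>)\<^sup>2 * qform \<theta> f v"
    unfolding qform_add_scale[OF f sa u v]
    by (simp add: norm_mult power_mult_distrib mult_ac flip: complex_norm_square)
  moreover have "0 \<le> qform \<theta> f (\<lambda>k. u k + complex_of_real t * ?\<beta> * v k)"
    using u v by (intro pos) auto
  ultimately show "0 \<le> qform \<theta> f u + 2 * t * (cmod ?\<beta>)\<^sup>2 + t\<^sup>2 * (cmod ?\<beta>)\<^sup>2 * qform \<theta> f v"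
    by simp
qed (use pos v in auto)

lemma l2norm_twprod_sq_sq_le:
  assumes S: "finsupp2 S" and sa: "twstar \<theta> S = S" and pos: "\<And>w. finsupp2 w \<Longrightarrow> 0 \<le> qform \<theta> S w"
    and x: "finsupp2 \<xi>"
  shows "(l2norm (twprod \<theta> S \<xi>))\<^sup>2 * (l2norm (twprod \<theta> S \<xi>))\<^sup>2 \<le> qform \<theta> S \<xi> * qform \<theta> S (twprod \<theta> S \<xi>)"
proof -
  let ?\<eta> = "twprod \<theta> S \<xi>"
  have e: "finsupp2 ?\<eta>" using S x by auto
  have "cmod (l2inner ?\<eta> ?\<eta>) = (l2norm ?\<eta>)\<^sup>2" by (simp add: l2inner_self[OF e] del: of_real_power)
  then show ?thesis
    using hermitian_form_cauchy_schwarz[OF S sa pos x e] by (simp add: power2_eq_square)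
qed

lemma twnorm_le_if_qform_le:
  assumes S: "finsupp2 S" and sa: "twstar \<theta> S = S" and pos: "\<And>w. finsupp2 w \<Longrightarrow> 0 \<le> qform \<theta> S w"
    and up: "\<And>w. finsupp2 w \<Longrightarrow> qform \<theta> S w \<le> q * (l2norm w)\<^sup>2" and q: "0 \<le> q"
  shows "twnorm \<theta> S \<le> q"
proof (rule twnorm_leI[OF S q])
  fix \<xi> assume x: "finsupp2 \<xi>"
  let ?\<eta> = "twprod \<theta> S \<xi>"
  have e: "finsupp2 ?\<eta>" using S x by auto
  have "qform \<theta> S \<xi> * qform \<theta> S ?\<eta> \<le> (q * (l2norm \<xi>)\<^sup>2) * (q * (l2norm ?\<eta>)\<^sup>2)"
    using q by (intro mult_mono up x e pos) auto
  then have "(l2norm ?\<eta>)\<^sup>2 * (l2norm ?\<eta>)\<^sup>2 \<le> (q * (l2norm \<xi>)\<^sup>2) * (q * (l2norm ?\<eta>)\<^sup>2)"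
    using l2norm_twprod_sq_sq_le[OF S sa pos x] by linarith
  also have "\<dots> = (q * l2norm \<xi>)\<^sup>2 * (l2norm ?\<eta>)\<^sup>2"
    by (simp add: power2_eq_square mult_ac)
  finally have "(l2norm ?\<eta>)\<^sup>2 * (l2norm ?\<eta>)\<^sup>2 \<le> (q * l2norm \<xi>)\<^sup>2 * (l2norm ?\<eta>)\<^sup>2" .
  then have "(l2norm ?\<eta>)\<^sup>2 \<le> (q * l2norm \<xi>)\<^sup>2"
    by (rule le_if_mult_self_le) simp
  then show "l2norm ?\<eta> \<le> q * l2norm \<xi>"
    by (rule power2_le_imp_le) (use q l2norm_nonneg[of \<xi>] in simp_all)
qed

lemma l2norm_twprod_sq_le:
  assumes S: "finsupp2 S" and sa: "twstar \<theta> S = S" and pos: "\<And>w. finsupp2 w \<Longrightarrow> 0 \<le> qform \<theta> S w"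
    and x: "finsupp2 \<xi>"
  shows "(l2norm (twprod \<theta> S \<xi>))\<^sup>2 \<le> twnorm \<theta> S * qform \<theta> S \<xi>"
proof -
  let ?\<eta> = "twprod \<theta> S \<xi>"
  have e: "finsupp2 ?\<eta>" using S x by auto
  have "qform \<theta> S ?\<eta> \<le> cmod (l2inner (twprod \<theta> S ?\<eta>) ?\<eta>)" by (rule complex_Re_le_cmod)
  also have "\<dots> \<le> l2norm (twprod \<theta> S ?\<eta>) * l2norm ?\<eta>"
    using S e by (intro l2inner_cauchy_schwarz) auto
  also have "\<dots> \<le> twnorm \<theta> S * (l2norm ?\<eta>)\<^sup>2"
    using mult_right_mono[OF l2norm_twprod_le[OF S e] l2norm_nonneg[of ?\<eta>]]
    by (simp add: power2_eq_square mult.assoc)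
  finally have "qform \<theta> S \<xi> * qform \<theta> S ?\<eta> \<le> qform \<theta> S \<xi> * (twnorm \<theta> S * (l2norm ?\<eta>)\<^sup>2)"
    using pos[OF x] by (rule mult_left_mono)
  then have "(l2norm ?\<eta>)\<^sup>2 * (l2norm ?\<eta>)\<^sup>2 \<le> (twnorm \<theta> S * qform \<theta> S \<xi>) * (l2norm ?\<eta>)\<^sup>2"
    using l2norm_twprod_sq_sq_le[OF S sa pos x] by (simp add: mult_ac)
  then show ?thesis
    by (rule le_if_mult_self_le) (use twnorm_nonneg[OF S] pos[OF x] in simp)
qed

lemma not_tw_invertible_if_approx_null:
  assumes T: "finsupp2 T"
    and approx: "\<And>e. e > 0 \<Longrightarrow> \<exists>\<xi>. finsupp2 \<xi> \<and> l2norm \<xi> = 1 \<and> l2norm (twprod \<theta> T \<xi>) < e"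
  shows "\<not> tw_invertible \<theta> T"
proof
  assume "tw_invertible \<theta> T"
  then obtain y where fy: "\<And>k. finsupp2 (y k)"
    and lim: "(\<lambda>k. twnorm \<theta> (twprod \<theta> (y k) T - twone)) \<longlonglongrightarrow> 0"
    unfolding tw_invertible_def by blast
  obtain k where k: "twnorm \<theta> (twprod \<theta> (y k) T - twone) < 1/2"
    using order_tendstoD(2)[OF lim, of "1/2"] eventually_sequentially by fastforce
  let ?Y = "twnorm \<theta> (y k)" and ?A = "twprod \<theta> (y k) T"
  have Y0: "0 \<le> ?Y" by (rule twnorm_nonneg[OF fy])
  obtain \<xi> where x: "finsupp2 \<xi>" "l2norm \<xi> = 1" "l2norm (twprod \<theta> T \<xi>) < 1 / (2 * (?Y + 1))"
    using approx[of "1 / (2 * (?Y + 1))"] Y0 by auto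
  have fA: "finsupp2 ?A" using fy T by auto
  \<comment> \<open>\<open>\<xi> = y (T \<xi>) - (y T - 1) \<xi>\<close>, and both terms are small.\<close>
  have "\<xi> = (\<lambda>p. twprod \<theta> (y k) (twprod \<theta> T \<xi>) p - twprod \<theta> (?A - twone) \<xi> p)"
    using twprod_diff_left[OF fA finsupp2_twone, where h=\<xi>]
    by (simp add: fun_diff_def twprod_one_left twprod_assoc[OF fy T])
  then have "l2norm \<xi> \<le> l2norm (twprod \<theta> (y k) (twprod \<theta> T \<xi>)) + l2norm (twprod \<theta> (?A - twone) \<xi>)"
    using fy T fA x by (metis l2norm_diff finsupp2_twprod finsupp2_minus finsupp2_twone)
  also have "\<dots> \<le> ?Y * l2norm (twprod \<theta> T \<xi>) + twnorm \<theta> (?A - twone) * l2norm \<xi>"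
    using fy T fA x by (intro add_mono l2norm_twprod_le) auto
  also have "\<dots> \<le> ?Y * (1 / (2 * (?Y + 1))) + 1/2 * 1"
    using x k Y0 by (intro add_mono mult_left_mono) auto
  also have "\<dots> < 1" using Y0 by (simp add: field_simps)
  finally show False using x by simp
qed

lemma twstar_affine:
  assumes sa: "twstar \<theta> f = f"
  shows "twstar \<theta> (\<lambda>k. complex_of_real c * f k + complex_of_real d * twone k) =
         (\<lambda>k. complex_of_real c * f k + complex_of_real d * twone k)"
proof
  fix k
  have fk: "f k = cnj (f (- k)) * cis (- 2 * pi * \<theta> * of_int (fst k * snd k))"
    using fun_cong[OF sa, of k] by (simp add: twstar_eq)
  show "twstar \<theta> (\<lambda>k. complex_of_real c * f k + complex_of_real d * twone k) k =
        complex_of_real c * f k + complex_of_real d * twone k"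
  proof (cases "k = 0")
    case True
    then have "f 0 = cnj (f 0)" using fk by simp
    then show ?thesis using True by (simp add: twstar_eq twone_eq)
  qed (simp add: twstar_eq twone_eq fk)
qed

lemma qform_affine:
  assumes f: "finsupp2 f" and x: "finsupp2 \<xi>"
  shows "qform \<theta> (\<lambda>k. complex_of_real c * f k + complex_of_real d * twone k) \<xi>
        = c * qform \<theta> f \<xi> + d * (l2norm \<xi>)\<^sup>2"
proof -
  have "twprod \<theta> (\<lambda>k. complex_of_real c * f k + complex_of_real d * twone k) \<xi>
      = (\<lambda>p. complex_of_real c * twprod \<theta> f \<xi> p + complex_of_real d * \<xi> p)"
    using f by (simp add: twprod_add_left[OF finsupp2_scale[OF f] finsupp2_scale[OF finsupp2_twone]]
        twprod_scale_left[OF f] twprod_scale_left[OF finsupp2_twone] twprod_one_left)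
  then show ?thesis
    by (simp add: l2inner_add_left[OF finsupp2_scale[OF finsupp2_twprod[OF f x]] finsupp2_scale[OF x]]
        l2inner_scale_left[OF finsupp2_twprod[OF f x]] l2inner_scale_left[OF x] l2inner_self[OF x]
        del: of_real_power)
qed

lemma qform_scale:
  assumes a: "finsupp2 a" and x: "finsupp2 \<xi>"
  shows "qform \<theta> a (\<lambda>k. complex_of_real r * \<xi> k) = r\<^sup>2 * qform \<theta> a \<xi>"
proof -
  have "l2inner (twprod \<theta> a (\<lambda>k. complex_of_real r * \<xi> k)) (\<lambda>k. complex_of_real r * \<xi> k)
      = complex_of_real (r\<^sup>2) * l2inner (twprod \<theta> a \<xi>) \<xi>"
    unfolding twprod_scale_right l2inner_scale_right l2inner_scale_left[OF finsupp2_twprod[OF a x]]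
    by (simp add: power2_eq_square)
  then show ?thesis by simp
qed

lemma abs_qform_le_l1norm:
  assumes f: "finsupp2 f" and x: "finsupp2 \<xi>"
  shows "\<bar>qform \<theta> f \<xi>\<bar> \<le> l1norm f * (l2norm \<xi>)\<^sup>2"
proof -
  have "\<bar>qform \<theta> f \<xi>\<bar> \<le> cmod (l2inner (twprod \<theta> f \<xi>) \<xi>)" by (rule abs_Re_le_cmod)
  also have "\<dots> \<le> l2norm (twprod \<theta> f \<xi>) * l2norm \<xi>"
    using f x by (intro l2inner_cauchy_schwarz) auto
  also have "\<dots> \<le> l1norm f * l2norm \<xi> * l2norm \<xi>"
    by (intro mult_right_mono l2norm_twprod_le_l1norm f x l2norm_nonneg)
  finally show ?thesis by (simp add: power2_eq_square mult.assoc)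
qed

definition qform_inf :: "real \<Rightarrow> coeffs \<Rightarrow> real" where
  "qform_inf \<theta> a = Inf {qform \<theta> a \<xi> | \<xi>. finsupp2 \<xi> \<and> l2norm \<xi> = 1}"

lemma bdd_below_qform_sphere:
  assumes a: "finsupp2 a"
  shows "bdd_below {qform \<theta> a \<xi> | \<xi>. finsupp2 \<xi> \<and> l2norm \<xi> = 1}"
proof (rule bdd_belowI)
  fix y assume "y \<in> {qform \<theta> a \<xi> | \<xi>. finsupp2 \<xi> \<and> l2norm \<xi> = 1}"
  then obtain \<xi> where "y = qform \<theta> a \<xi>" "finsupp2 \<xi>" "l2norm \<xi> = 1" by blast
  then show "- l1norm a \<le> y" using abs_qform_le_l1norm[OF a, of \<xi> \<theta>] by simp
qed

lemma qform_inf_le: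
  assumes a: "finsupp2 a" and x: "finsupp2 \<xi>"
  shows "qform_inf \<theta> a * (l2norm \<xi>)\<^sup>2 \<le> qform \<theta> a \<xi>"
proof (cases "l2norm \<xi> = 0")
  case True
  then show ?thesis using l2norm_zero_iff[OF x] by (simp add: twprod_zero_right)
next
  case False
  then have pos: "l2norm \<xi> > 0" using l2norm_nonneg[of \<xi>] by linarith
  let ?r = "1 / l2norm \<xi>"
  let ?\<eta> = "\<lambda>k. complex_of_real ?r * \<xi> k"
  have "l2norm ?\<eta> = 1"
    using pos by (subst l2norm_scale[OF x]) (simp add: norm_divide)
  then have "qform \<theta> a ?\<eta> \<in> {qform \<theta> a \<xi> | \<xi>. finsupp2 \<xi> \<and> l2norm \<xi> = 1}"
    using x by blast
  then have "qform_inf \<theta> a \<le> qform \<theta> a ?\<eta>"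
    unfolding qform_inf_def by (rule cInf_lower[OF _ bdd_below_qform_sphere[OF a]])
  also have "\<dots> = ?r\<^sup>2 * qform \<theta> a \<xi>" by (rule qform_scale[OF a x])
  finally show ?thesis using pos by (simp add: field_simps power2_eq_square)
qed

lemma qform_inf_in_tw_spectrum:
  assumes a: "finsupp2 a" and sa: "twstar \<theta> a = a"
  shows "complex_of_real (qform_inf \<theta> a) \<in> tw_spectrum \<theta> a"
proof -
  let ?m = "qform_inf \<theta> a"
  let ?R = "{qform \<theta> a \<xi> | \<xi>. finsupp2 \<xi> \<and> l2norm \<xi> = 1}"
  define T where "T = (\<lambda>k. complex_of_real 1 * a k + complex_of_real (- ?m) * twone k)"
  have fT: "finsupp2 T" unfolding T_def using a by (intro finsupp2_add finsupp2_scale finsupp2_twone)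
  have saT: "twstar \<theta> T = T" unfolding T_def by (rule twstar_affine[OF sa])
  have qT: "qform \<theta> T \<xi> = qform \<theta> a \<xi> - ?m * (l2norm \<xi>)\<^sup>2" if "finsupp2 \<xi>" for \<xi>
    unfolding T_def qform_affine[OF a that] by simp
  have posT: "0 \<le> qform \<theta> T \<xi>" if "finsupp2 \<xi>" for \<xi>
    using qform_inf_le[OF a that] qT[OF that] by simp
  \<comment> \<open>Unit vectors almost minimising the form are approximately annihilated by \<open>a - qform_inf \<theta> a\<close>.\<close>
  have "\<exists>\<xi>. finsupp2 \<xi> \<and> l2norm \<xi> = 1 \<and> l2norm (twprod \<theta> T \<xi>) < e" if e: "e > 0" for e
  proof -
    let ?N = "twnorm \<theta> T"
    have N0: "0 \<le> ?N" by (rule twnorm_nonneg[OF fT])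
    let ?d = "e\<^sup>2 / (?N + 1)"
    have "Inf ?R < ?m + ?d" using e N0 by (simp add: qform_inf_def)
    then obtain \<xi> where x: "finsupp2 \<xi>" "l2norm \<xi> = 1" "qform \<theta> a \<xi> < ?m + ?d"
      using cInf_lessD[of ?R] finsupp2_twone l2norm_twone by blast
    have "(l2norm (twprod \<theta> T \<xi>))\<^sup>2 \<le> ?N * qform \<theta> T \<xi>"
      by (rule l2norm_twprod_sq_le[OF fT saT posT x(1)])
    also have "\<dots> \<le> ?N * ?d" using qT[OF x(1)] x N0 by (intro mult_left_mono) auto
    also have "\<dots> < e\<^sup>2" using N0 e by (simp add: field_simps)
    finally have "l2norm (twprod \<theta> T \<xi>) < e"
      using e by (simp add: power_less_imp_less_base)
    then show ?thesis using x by blast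
  qed
  then have "\<not> tw_invertible \<theta> T" by (rule not_tw_invertible_if_approx_null[OF fT])
  moreover have "T = a - (\<lambda>k. complex_of_real ?m * twone k)" by (simp add: T_def fun_eq_iff)
  ultimately show ?thesis by (simp add: tw_spectrum_def)
qed

lemma qform_lower_bound_if_strictly_pos:
  assumes a: "finsupp2 a" and pos: "tw_strictly_pos \<theta> a"
  obtains m where "m > 0" "\<And>\<xi>. finsupp2 \<xi> \<Longrightarrow> m * (l2norm \<xi>)\<^sup>2 \<le> qform \<theta> a \<xi>"
proof
  have "twstar \<theta> a = a" and "tw_spectrum \<theta> a \<subseteq> complex_of_real ` {0<..}"
    using pos by (auto simp: tw_strictly_pos_def)
  then show "qform_inf \<theta> a > 0"
    using qform_inf_in_tw_spectrum[where \<theta>=\<theta>, OF a] by auto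
qed (rule qform_inf_le[OF a])

definition autocorr :: "(int \<times> int \<Rightarrow> real) \<Rightarrow> (int \<times> int) set \<Rightarrow> int \<times> int \<Rightarrow> real" where
  "autocorr h B k = (\<Sum>v\<in>B. h (v + k) * h v)"

lemma l2inner_twprod_mult_eq:
  assumes a: "finsupp2 a" and x: "finsupp2 \<xi>"
  shows "l2inner (twprod \<theta> (\<lambda>k. a k * c k) \<xi>) \<xi> =
    (\<Sum>p\<in>supp2 \<xi>. \<Sum>k\<in>supp2 a. a k * c k * \<xi> (p - k) * twphase \<theta> k p * cnj (\<xi> p))"
proof -
  have fa: "finite (supp2 a)" and fx: "finite (supp2 \<xi>)" using a x by (simp_all add: finsupp2_def)
  have "supp2 (\<lambda>k. a k * c k) \<subseteq> supp2 a" by (auto simp: supp2_def)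
  with fa fx show ?thesis
    by (simp add: l2inner_eq_right[OF finsupp2_twprod[OF finsupp2_mult_right[OF a] x] fx order_refl]
        twprod_eq[OF fa] sum_distrib_right)
qed

lemma sum_qform_translates:
  fixes h :: "int \<times> int \<Rightarrow> real"
  assumes a: "finsupp2 a" and x: "finsupp2 \<xi>" and fB: "finite B" and hB: "\<And>v. v \<notin> B \<Longrightarrow> h v = 0"
  defines "U \<equiv> (\<lambda>(p, v). p + v) ` (supp2 \<xi> \<times> B)"
  shows "(\<Sum>u\<in>U. l2inner (twprod \<theta> a (\<lambda>p. complex_of_real (h (u - p)) * \<xi> p))
                          (\<lambda>p. complex_of_real (h (u - p)) * \<xi> p))
       = l2inner (twprod \<theta> (\<lambda>k. a k * complex_of_real (autocorr h B k)) \<xi>) \<xi>"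
proof -
  let ?Sa = "supp2 a" and ?Sx = "supp2 \<xi>"
  have fa: "finite ?Sa" and fx: "finite ?Sx" using a x by (simp_all add: finsupp2_def)
  have fU: "finite U" unfolding U_def using fx fB by auto
  define \<eta> where "\<eta> u = (\<lambda>p. complex_of_real (h (u - p)) * \<xi> p)" for u
  have fe: "finsupp2 (\<eta> u)" for u unfolding \<eta>_def using x by (rule finsupp2_mult_left)
  have se: "supp2 (\<eta> u) \<subseteq> ?Sx" for u by (auto simp: \<eta>_def supp2_def)
  have summand: "l2inner (twprod \<theta> a (\<eta> u)) (\<eta> u) =
     (\<Sum>p\<in>?Sx. \<Sum>k\<in>?Sa. a k * \<xi> (p - k) * twphase \<theta> k p * cnj (\<xi> p) *
        complex_of_real (h (u - p + k) * h (u - p)))" for u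
    unfolding l2inner_eq_right[OF finsupp2_twprod[OF a fe] fx se] twprod_eq[OF fa order_refl]
    by (intro sum.cong refl) (simp add: sum_distrib_left sum_distrib_right \<eta>_def algebra_simps)
  have inner: "(\<Sum>u\<in>U. h (u - p + k) * h (u - p)) = autocorr h B k" if p: "p \<in> ?Sx" for p k
    unfolding autocorr_def
  proof (subst sum_translate[OF fU, of p B])
    show "(+) p ` B \<subseteq> U" unfolding U_def using p by force
    fix u assume "u \<notin> (+) p ` B"
    then have "u - p \<notin> B" by (metis add_diff_cancel_left' diff_add_cancel image_eqI)
    then show "h (u - p + k) * h (u - p) = 0" using hB by simp
  qed (simp add: algebra_simps)
  have "(\<Sum>u\<in>U. l2inner (twprod \<theta> a (\<eta> u)) (\<eta> u)) =
     (\<Sum>p\<in>?Sx. \<Sum>k\<in>?Sa. a k * \<xi> (p - k) * twphase \<theta> k p * cnj (\<xi> p) *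
        complex_of_real (\<Sum>u\<in>U. h (u - p + k) * h (u - p)))"
    by (simp add: summand sum.swap[of _ U] sum_distrib_left)
  also have "\<dots> = (\<Sum>p\<in>?Sx. \<Sum>k\<in>?Sa. a k * \<xi> (p - k) * twphase \<theta> k p * cnj (\<xi> p) *
        complex_of_real (autocorr h B k))"
    by (intro sum.cong refl) (simp add: inner)
  also have "\<dots> = l2inner (twprod \<theta> (\<lambda>k. a k * complex_of_real (autocorr h B k)) \<xi>) \<xi>"
    by (simp add: l2inner_twprod_mult_eq[OF a x] mult_ac)
  finally show ?thesis by (simp add: \<eta>_def)
qed

lemma qform_schur_autocorr_ge:
  fixes h :: "int \<times> int \<Rightarrow> real"
  assumes a: "finsupp2 a" and x: "finsupp2 \<xi>" and fB: "finite B" and hB: "\<And>v. v \<notin> B \<Longrightarrow> h v = 0"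
    and lb: "\<And>\<eta>. finsupp2 \<eta> \<Longrightarrow> m * (l2norm \<eta>)\<^sup>2 \<le> qform \<theta> a \<eta>"
  shows "m * autocorr h B 0 * (l2norm \<xi>)\<^sup>2 \<le> qform \<theta> (\<lambda>k. a k * complex_of_real (autocorr h B k)) \<xi>"
proof -
  define U where "U = (\<lambda>(p, v). p + v) ` (supp2 \<xi> \<times> B)"
  define \<eta> where "\<eta> u = (\<lambda>p. complex_of_real (h (u - p)) * \<xi> p)" for u
  have fe: "finsupp2 (\<eta> u)" for u unfolding \<eta>_def using x by (rule finsupp2_mult_left)
  \<comment> \<open>For \<open>a = 1\<close> the translate identity computes the total mass of the translates.\<close>
  have one: "(\<lambda>k. twone k * complex_of_real (autocorr h B k)) =
      (\<lambda>k. complex_of_real (autocorr h B 0) * twone k)"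
    by (auto simp: twone_eq fun_eq_iff)
  have "complex_of_real (\<Sum>u\<in>U. (l2norm (\<eta> u))\<^sup>2) =
      (\<Sum>u\<in>U. l2inner (twprod \<theta> twone (\<eta> u)) (\<eta> u))"
    by (simp add: twprod_one_left l2inner_self[OF fe] del: of_real_power)
  also have "\<dots> = l2inner (twprod \<theta> (\<lambda>k. twone k * complex_of_real (autocorr h B k)) \<xi>) \<xi>"
    unfolding \<eta>_def U_def by (rule sum_qform_translates[OF finsupp2_twone x fB hB])
  also have "\<dots> = complex_of_real (autocorr h B 0 * (l2norm \<xi>)\<^sup>2)"
    unfolding one twprod_scale_left[OF finsupp2_twone] twprod_one_left
    by (simp add: l2inner_scale_left[OF x] l2inner_self[OF x] del: of_real_power)
  finally have mass: "(\<Sum>u\<in>U. (l2norm (\<eta> u))\<^sup>2) = autocorr h B 0 * (l2norm \<xi>)\<^sup>2"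
    by (simp only: of_real_eq_iff)
  have "m * autocorr h B 0 * (l2norm \<xi>)\<^sup>2 = (\<Sum>u\<in>U. m * (l2norm (\<eta> u))\<^sup>2)"
    by (simp add: mass sum_distrib_left[symmetric] mult.assoc)
  also have "\<dots> \<le> (\<Sum>u\<in>U. qform \<theta> a (\<eta> u))"
    by (intro sum_mono lb fe)
  also have "\<dots> = Re (\<Sum>u\<in>U. l2inner (twprod \<theta> a (\<eta> u)) (\<eta> u))"
    by (simp only: Re_sum)
  also have "(\<Sum>u\<in>U. l2inner (twprod \<theta> a (\<eta> u)) (\<eta> u)) =
      l2inner (twprod \<theta> (\<lambda>k. a k * complex_of_real (autocorr h B k)) \<xi>) \<xi>"
    unfolding \<eta>_def U_def by (rule sum_qform_translates[OF a x fB hB])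
  finally show ?thesis .
qed

definition geom_trunc :: "real \<Rightarrow> nat \<Rightarrow> int \<Rightarrow> real" where
  "geom_trunc r L i = (if 0 \<le> i \<and> i < int L then r ^ nat i else 0)"

definition geom_autocorr :: "real \<Rightarrow> nat \<Rightarrow> int \<Rightarrow> real" where
  "geom_autocorr r L c = (\<Sum>i\<in>{0..<int L}. geom_trunc r L (i + c) * geom_trunc r L i)"

lemma geom_autocorr_eq_nat: "geom_autocorr r L c = (\<Sum>i<L. geom_trunc r L (int i + c) * r ^ i)"
proof -
  have "{0..<int L} = int ` {0..<L}" by (simp add: image_int_atLeastLessThan)
  then have "geom_autocorr r L c = (\<Sum>i\<in>{0..<L}. geom_trunc r L (int i + c) * geom_trunc r L (int i))"
    unfolding geom_autocorr_def by (simp add: sum.reindex)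
  also have "\<dots> = (\<Sum>i<L. geom_trunc r L (int i + c) * r ^ i)"
    by (intro sum.cong) (auto simp: geom_trunc_def)
  finally show ?thesis .
qed

lemma geom_autocorr_eq: "geom_autocorr r L c = r ^ nat \<bar>c\<bar> * (\<Sum>i<L - nat \<bar>c\<bar>. (r\<^sup>2) ^ i)"
proof (cases "c \<ge> 0")
  case True
  define n where "n = nat c"
  have c: "c = int n" using True by (simp add: n_def)
  have "geom_autocorr r L c = (\<Sum>i<L. if i + n < L then r ^ n * (r\<^sup>2) ^ i else 0)"
    unfolding geom_autocorr_eq_nat c
    by (intro sum.cong refl) (auto simp: geom_trunc_def nat_add_distrib power_add
        power_mult[symmetric] mult_ac simp flip: power_mult_distrib power2_eq_square)
  also have "\<dots> = (\<Sum>i\<in>{i \<in> {..<L}. i + n < L}. r ^ n * (r\<^sup>2) ^ i)"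
    by (rule sum.inter_filter[symmetric]) simp
  also have "{i \<in> {..<L}. i + n < L} = {..<L - n}" by auto
  finally show ?thesis by (simp add: c sum_distrib_left)
next
  case False
  define n where "n = nat (- c)"
  have c: "c = - int n" using False by (simp add: n_def)
  have "geom_autocorr r L c = (\<Sum>i<L. if n \<le> i then r ^ n * (r\<^sup>2) ^ (i - n) else 0)"
    unfolding geom_autocorr_eq_nat c
  proof (intro sum.cong refl)
    fix i assume i: "i \<in> {..<L}"
    show "geom_trunc r L (int i + - int n) * r ^ i = (if n \<le> i then r ^ n * (r\<^sup>2) ^ (i - n) else 0)"
    proof (cases "n \<le> i")
      case True
      then have "geom_trunc r L (int i + - int n) = r ^ (i - n)"
        using i by (simp add: geom_trunc_def nat_diff_distrib)
      moreover have "r ^ (i - n) * r ^ i = r ^ n * (r\<^sup>2) ^ (i - n)"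
      proof -
        have e: "i = (i - n) + n" using True by simp
        show ?thesis
          by (subst (2) e) (simp add: power_add power_mult[symmetric] power2_eq_square mult_ac
              flip: power_mult_distrib)
      qed
      ultimately show ?thesis using True by simp
    qed (simp add: geom_trunc_def)
  qed
  also have "\<dots> = (\<Sum>i\<in>{i \<in> {..<L}. n \<le> i}. r ^ n * (r\<^sup>2) ^ (i - n))"
    by (rule sum.inter_filter[symmetric]) simp
  also have "{i \<in> {..<L}. n \<le> i} = {0 + n..<(L - n) + n}" by auto
  also have "(\<Sum>i\<in>{0 + n..<(L - n) + n}. r ^ n * (r\<^sup>2) ^ (i - n)) = (\<Sum>i<L - n. r ^ n * (r\<^sup>2) ^ i)"
    by (subst sum.shift_bounds_nat_ivl) (simp add: atLeast0LessThan)
  finally show ?thesis by (simp add: c sum_distrib_left)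
qed

lemma geom_autocorr_zero_ge_1: "L \<ge> 1 \<Longrightarrow> geom_autocorr r L 0 \<ge> 1"
  by (simp add: geom_autocorr_eq lessThan_atLeast0 sum.atLeast_Suc_lessThan sum_nonneg)

lemma geom_autocorr_ratio_tendsto:
  assumes r: "0 \<le> r" "r < 1"
  shows "(\<lambda>L. geom_autocorr r L c / geom_autocorr r L 0) \<longlonglongrightarrow> r ^ nat \<bar>c\<bar>"
proof -
  let ?n = "nat \<bar>c\<bar>" and ?s = "1 / (1 - r\<^sup>2)"
  have "\<bar>r\<^sup>2\<bar> < 1" using r by (simp add: abs_square_less_1)
  then have s0: "?s \<noteq> 0" and sums: "(\<lambda>L. \<Sum>i<L. (r\<^sup>2) ^ i) \<longlonglongrightarrow> ?s"
    using geometric_sums[of "r\<^sup>2"] by (auto simp: sums_def)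
  have "(\<lambda>L. r ^ ?n * ((\<Sum>i<L. (r\<^sup>2) ^ i) / (\<Sum>i<L + ?n. (r\<^sup>2) ^ i))) \<longlonglongrightarrow> r ^ ?n * (?s / ?s)"
    by (intro tendsto_intros sums LIMSEQ_ignore_initial_segment[OF sums] s0)
  then have "(\<lambda>L. geom_autocorr r (L + ?n) c / geom_autocorr r (L + ?n) 0) \<longlonglongrightarrow> r ^ ?n"
    using s0 by (simp add: geom_autocorr_eq)
  then show ?thesis by (rule LIMSEQ_offset)
qed

lemma autocorr_geom_trunc:
  "autocorr (\<lambda>v. geom_trunc r L (fst v) * geom_trunc r L (snd v)) ({0..<int L} \<times> {0..<int L}) k =
     geom_autocorr r L (fst k) * geom_autocorr r L (snd k)"
  by (simp add: autocorr_def geom_autocorr_def sum_product sum.cartesian_product split_def mult_ac)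

lemma P_r_eq: "P_r a r k = (if k = 0 then 1 else a k * r ^ (nat \<bar>fst k\<bar> + nat \<bar>snd k\<bar>))"
  by (cases k) (simp add: P_r_def zero_prod_def)

lemma P_r_of_real:
  assumes "a (0, 0) = 1"
  shows "P_r a (complex_of_real r) = (\<lambda>k. a k * complex_of_real (r ^ nat \<bar>fst k\<bar> * r ^ nat \<bar>snd k\<bar>))"
  using assms by (auto simp: fun_eq_iff P_r_eq power_add zero_prod_def)

lemma finsupp2_P_r: "finsupp2 a \<Longrightarrow> finsupp2 (P_r a r)"
  by (rule finsupp2_subsetI[where S="insert 0 (supp2 a)"])
    (auto simp: finsupp2_def supp2_def P_r_eq split: if_splits)

lemma qform_mult_tendsto:
  assumes a: "finsupp2 a" and x: "finsupp2 \<xi>" and lim: "\<And>k. (\<lambda>L. c L k) \<longlonglongrightarrow> w k"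
  shows "(\<lambda>L. qform \<theta> (\<lambda>k. a k * complex_of_real (c L k)) \<xi>) \<longlonglongrightarrow> qform \<theta> (\<lambda>k. a k * complex_of_real (w k)) \<xi>"
  unfolding l2inner_twprod_mult_eq[OF a x] by (intro tendsto_intros lim)

lemma qform_mult_scale:
  assumes a: "finsupp2 a" and x: "finsupp2 \<xi>"
  shows "qform \<theta> (\<lambda>k. a k * complex_of_real (s * c k)) \<xi> = s * qform \<theta> (\<lambda>k. a k * complex_of_real (c k)) \<xi>"
  unfolding l2inner_twprod_mult_eq[OF a x] by (simp add: sum_distrib_left mult_ac)

lemma qform_P_r_ge:
  assumes a: "finsupp2 a" and a0: "a (0, 0) = 1"
    and lb: "\<And>\<eta>. finsupp2 \<eta> \<Longrightarrow> m * (l2norm \<eta>)\<^sup>2 \<le> qform \<theta> a \<eta>"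
    and r: "0 \<le> r" "r \<le> 1" and x: "finsupp2 \<xi>"
  shows "m * (l2norm \<xi>)\<^sup>2 \<le> qform \<theta> (P_r a (complex_of_real r)) \<xi>"
proof (cases "r = 1")
  case True
  have "P_r a (complex_of_real r) = a" unfolding P_r_of_real[where a=a, OF a0] True by simp
  then show ?thesis using lb[OF x] by simp
next
  case False
  with r have r: "0 \<le> r" "r < 1" by auto
  let ?G = "geom_autocorr r"
  define \<psi> where "\<psi> L k = ?G L (fst k) / ?G L 0 * (?G L (snd k) / ?G L 0)" for L and k :: "int \<times> int"
  have "m * (l2norm \<xi>)\<^sup>2 \<le> qform \<theta> (\<lambda>k. a k * complex_of_real (\<psi> L k)) \<xi>" if L: "L \<ge> 1" for L
  proof -
    define h where "h v = geom_trunc r L (fst v) * geom_trunc r L (snd v)" for v :: "int \<times> int"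
    define B where "B = {0..<int L} \<times> {0..<int L}"
    have hB: "h v = 0" if "v \<notin> B" for v
      using that by (cases v) (auto simp: h_def B_def geom_trunc_def)
    have G: "autocorr h B k = ?G L (fst k) * ?G L (snd k)" for k
      unfolding h_def B_def by (rule autocorr_geom_trunc)
    have G1: "?G L 0 \<ge> 1" by (rule geom_autocorr_zero_ge_1[OF L])
    then have G0: "?G L 0 * ?G L 0 > 0" by simp
    have "(?G L 0 * ?G L 0) * (m * (l2norm \<xi>)\<^sup>2) \<le> qform \<theta> (\<lambda>k. a k * complex_of_real (autocorr h B k)) \<xi>"
      using qform_schur_autocorr_ge[where h=h and B=B, OF a x _ hB lb] G[of 0] by (simp add: B_def mult_ac)
    also have "\<dots> = (?G L 0 * ?G L 0) * qform \<theta> (\<lambda>k. a k * complex_of_real (\<psi> L k)) \<xi>"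
    proof -
      have "autocorr h B k = (?G L 0 * ?G L 0) * \<psi> L k" for k
        using G1 by (simp add: G \<psi>_def field_simps)
      then show ?thesis by (simp only: qform_mult_scale[OF a x])
    qed
    finally show ?thesis using G0 by (rule mult_left_le_imp_le)
  qed
  moreover have "(\<lambda>L. qform \<theta> (\<lambda>k. a k * complex_of_real (\<psi> L k)) \<xi>) \<longlonglongrightarrow> qform \<theta> (P_r a (complex_of_real r)) \<xi>"
    unfolding P_r_of_real[where a=a, OF a0] \<psi>_def
    by (intro qform_mult_tendsto a x tendsto_mult geom_autocorr_ratio_tendsto r)
  ultimately show ?thesis
    by (intro LIMSEQ_le_const) auto
qed

lemma l1norm_P_r_le:
  assumes a: "finsupp2 a" and a0: "a (0, 0) = 1" and r: "0 \<le> r" "r \<le> 1"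
  shows "l1norm (P_r a (complex_of_real r)) \<le> l1norm a"
proof -
  have fa: "finite (supp2 a)" using a by (simp add: finsupp2_def)
  have "supp2 (P_r a (complex_of_real r)) \<subseteq> supp2 a"
    using a0 by (auto simp: supp2_def P_r_eq zero_prod_def split: if_splits)
  then have "l1norm (P_r a (complex_of_real r)) = (\<Sum>k\<in>supp2 a. cmod (P_r a (complex_of_real r) k))"
    by (rule l1norm_eq[OF fa])
  also have "\<dots> \<le> (\<Sum>k\<in>supp2 a. cmod (a k))"
  proof (rule sum_mono)
    fix k
    have "r ^ nat \<bar>fst k\<bar> * r ^ nat \<bar>snd k\<bar> \<le> 1"
      using r by (intro mult_le_one power_le_one) auto
    moreover have "cmod (P_r a (complex_of_real r) k) = cmod (a k) * (r ^ nat \<bar>fst k\<bar> * r ^ nat \<bar>snd k\<bar>)"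
      unfolding P_r_of_real[where a=a, OF a0] using r by (simp add: norm_mult norm_power)
    ultimately show "cmod (P_r a (complex_of_real r) k) \<le> cmod (a k)"
      using r by (simp add: mult_left_le)
  qed
  finally show ?thesis by (simp add: l1norm_def)
qed

lemma P_r_hermitian:
  assumes sa: "twstar \<theta> a = a" and a0: "a (0, 0) = 1"
  shows "twstar \<theta> (P_r a (complex_of_real r)) = P_r a (complex_of_real r)"
proof
  fix k :: "int \<times> int"
  have "a k = cnj (a (- k)) * cis (- 2 * pi * \<theta> * of_int (fst k * snd k))"
    using fun_cong[OF sa, of k] by (simp add: twstar_eq)
  then show "twstar \<theta> (P_r a (complex_of_real r)) k = P_r a (complex_of_real r) k"
    unfolding P_r_of_real[where a=a, OF a0] twstar_eq by (simp add: mult_ac)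
qed

lemma twnorm_P_r_diff_small:
  assumes a: "finsupp2 a" and e: "e > 0"
  obtains \<delta> where "\<delta> > 0"
    "\<And>r. dist r (complex_of_real r0) < \<delta> \<Longrightarrow> twnorm \<theta> (\<lambda>k. P_r a r k - P_r a (complex_of_real r0) k) < e"
proof -
  define n where "n k = nat \<bar>fst k\<bar> + nat \<bar>snd k\<bar>" for k :: "int \<times> int"
  define g where "g r = (\<Sum>k\<in>supp2 a. cmod (a k) * cmod (r ^ n k - complex_of_real r0 ^ n k))"
    for r :: complex
  have "isCont g (complex_of_real r0)" unfolding g_def by (intro continuous_intros)
  then obtain \<delta> where \<delta>: "\<delta> > 0"
    "\<And>r. dist r (complex_of_real r0) < \<delta> \<Longrightarrow> dist (g r) (g (complex_of_real r0)) < e"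
    using e unfolding continuous_at_eps_delta by blast
  have g0: "g (complex_of_real r0) = 0" by (simp add: g_def)
  have bound: "twnorm \<theta> (\<lambda>k. P_r a r k - P_r a (complex_of_real r0) k) \<le> g r" for r
  proof -
    let ?d = "\<lambda>k. P_r a r k - P_r a (complex_of_real r0) k"
    have fa: "finite (supp2 a)" using a by (simp add: finsupp2_def)
    have "supp2 ?d \<subseteq> supp2 a" by (auto simp: supp2_def P_r_eq split: if_splits)
    then have "l1norm ?d = (\<Sum>k\<in>supp2 a. cmod (?d k))" by (rule l1norm_eq[OF fa])
    also have "\<dots> \<le> g r" unfolding g_def n_def
      by (rule sum_mono) (simp add: P_r_eq norm_mult right_diff_distrib[symmetric])
    moreover have "twnorm \<theta> ?d \<le> l1norm ?d"
      using a by (intro twnorm_le_l1norm finsupp2_diff finsupp2_P_r)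
    ultimately show ?thesis by linarith
  qed
  show ?thesis
  proof (rule that[OF \<delta>(1)])
    fix r assume "dist r (complex_of_real r0) < \<delta>"
    then have "g r < e" using \<delta>(2)[of r] g0 by (simp add: dist_real_def)
    then show "twnorm \<theta> (\<lambda>k. P_r a r k - P_r a (complex_of_real r0) k) < e"
      using bound[of r] by linarith
  qed
qed

lemma twnorm_affine_le:
  assumes P: "finsupp2 P" and sa: "twstar \<theta> P = P"
    and lb: "\<And>\<xi>. finsupp2 \<xi> \<Longrightarrow> m * (l2norm \<xi>)\<^sup>2 \<le> qform \<theta> P \<xi>"
    and ub: "\<And>\<xi>. finsupp2 \<xi> \<Longrightarrow> qform \<theta> P \<xi> \<le> M * (l2norm \<xi>)\<^sup>2"
    and mM: "m \<le> M" and c: "0 \<le> c" "c * (M + t) \<le> 1"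
  shows "twnorm \<theta> (\<lambda>k. complex_of_real (- c) * P k + complex_of_real (1 - c * t) * twone k)
           \<le> 1 - c * (m + t)"
proof -
  let ?S = "\<lambda>k. complex_of_real (- c) * P k + complex_of_real (1 - c * t) * twone k"
  have qS: "qform \<theta> ?S \<xi> = (1 - c * t) * (l2norm \<xi>)\<^sup>2 - c * qform \<theta> P \<xi>" if "finsupp2 \<xi>" for \<xi>
    unfolding qform_affine[OF P that] by simp
  show ?thesis
  proof (rule twnorm_le_if_qform_le)
    show "finsupp2 ?S" using P by (intro finsupp2_add finsupp2_scale finsupp2_twone)
    show "twstar \<theta> ?S = ?S" by (rule twstar_affine[OF sa])
    show "0 \<le> 1 - c * (m + t)"
      using c mult_left_mono[OF add_right_mono[OF mM, of t] c(1)] by linarith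
    fix \<xi> assume x: "finsupp2 \<xi>"
    have "c * qform \<theta> P \<xi> \<le> c * (M * (l2norm \<xi>)\<^sup>2)" by (rule mult_left_mono[OF ub[OF x] c(1)])
    moreover have "0 \<le> (1 - c * (M + t)) * (l2norm \<xi>)\<^sup>2" using c by simp
    ultimately show "0 \<le> qform \<theta> ?S \<xi>" unfolding qS[OF x] by (simp add: algebra_simps)
    have "c * (m * (l2norm \<xi>)\<^sup>2) \<le> c * qform \<theta> P \<xi>" by (rule mult_left_mono[OF lb[OF x] c(1)])
    then show "qform \<theta> ?S \<xi> \<le> (1 - c * (m + t)) * (l2norm \<xi>)\<^sup>2"
      unfolding qS[OF x] by (simp add: algebra_simps)
  qed
qed

lemma tw_invertible_perturbation:
  assumes P: "finsupp2 P" and sa: "twstar \<theta> P = P"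
    and lb: "\<And>\<xi>. finsupp2 \<xi> \<Longrightarrow> m * (l2norm \<xi>)\<^sup>2 \<le> qform \<theta> P \<xi>"
    and ub: "\<And>\<xi>. finsupp2 \<xi> \<Longrightarrow> qform \<theta> P \<xi> \<le> M * (l2norm \<xi>)\<^sup>2"
    and m: "0 < m" "m \<le> M" and t: "0 \<le> t" and e: "finsupp2 e" "twnorm \<theta> e \<le> m / 2"
  shows "tw_invertible \<theta> (\<lambda>k. P k + e k + complex_of_real t * twone k)"
proof (rule tw_invertible_neumann)
  define c where "c = 1 / (M + t)"
  have c: "c > 0" "c * (M + t) = 1" using m t by (simp_all add: c_def)
  let ?S = "\<lambda>k. complex_of_real (- c) * P k + complex_of_real (1 - c * t) * twone k"
  show "finsupp2 (\<lambda>k. P k + e k + complex_of_real t * twone k)"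
    using P e(1) by (intro finsupp2_add finsupp2_scale finsupp2_twone)
  show "c > 0" by (fact c(1))
  have "(\<lambda>k. twone k - complex_of_real c * (P k + e k + complex_of_real t * twone k)) =
      (\<lambda>k. ?S k - complex_of_real c * e k)"
    by (simp add: fun_eq_iff algebra_simps)
  moreover have "twnorm \<theta> (\<lambda>k. ?S k - complex_of_real c * e k) < 1"
  proof -
    have fS: "finsupp2 ?S" using P by (intro finsupp2_add finsupp2_scale finsupp2_twone)
    have "twnorm \<theta> (\<lambda>k. ?S k - complex_of_real c * e k) \<le> twnorm \<theta> ?S + twnorm \<theta> (\<lambda>k. complex_of_real c * e k)"
      using fS e(1) by (intro twnorm_diff) auto
    also have "\<dots> \<le> twnorm \<theta> ?S + cmod (complex_of_real c) * twnorm \<theta> e"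
      by (intro add_left_mono twnorm_scale e(1))
    also have "\<dots> \<le> (1 - c * (m + t)) + c * (m / 2)"
      using c e(2) by (intro add_mono twnorm_affine_le[OF P sa lb ub m(2)]) (simp_all add: mult_left_mono)
    also have "\<dots> < 1"
    proof -
      have "0 < c * m" "0 \<le> c * t" using c m t by simp_all
      then show ?thesis by (simp add: algebra_simps)
    qed
    finally show ?thesis .
  qed
  ultimately show "twnorm \<theta> (\<lambda>k. twone k - complex_of_real c * (P k + e k + complex_of_real t * twone k)) < 1"
    by simp
qed (rule refl)

lemma tw_spectrum_P_r_near:
  assumes a: "finsupp2 a" and sa: "twstar \<theta> a = a" and a0: "a (0, 0) = 1"
    and m: "m > 0" and lb: "\<And>\<xi>. finsupp2 \<xi> \<Longrightarrow> m * (l2norm \<xi>)\<^sup>2 \<le> qform \<theta> a \<xi>"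
    and r0: "r0 \<in> {0..1}" and near: "twnorm \<theta> (\<lambda>k. P_r a r k - P_r a (complex_of_real r0) k) \<le> m / 2"
  shows "tw_spectrum \<theta> (P_r a r) \<subseteq> - \<real>\<^sub>\<le>\<^sub>0"
proof
  fix z assume z: "z \<in> tw_spectrum \<theta> (P_r a r)"
  let ?P0 = "P_r a (complex_of_real r0)" and ?e = "\<lambda>k. P_r a r k - P_r a (complex_of_real r0) k"
  show "z \<in> - \<real>\<^sub>\<le>\<^sub>0"
  proof
    assume "z \<in> \<real>\<^sub>\<le>\<^sub>0"
    then obtain s where s: "z = complex_of_real s" "s \<le> 0" by (auto elim: nonpos_Reals_cases)
    \<comment> \<open>The form of \<open>P\<^sub>r\<^sub>0(a)\<close> lies between \<open>m\<close> and \<open>\<parallel>a\<parallel>\<^sub>1 + m\<close>.\<close>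
    have "tw_invertible \<theta> (\<lambda>k. ?P0 k + ?e k + complex_of_real (- s) * twone k)"
    proof (rule tw_invertible_perturbation[where m=m and M="l1norm a + m"])
      show "finsupp2 ?P0" by (rule finsupp2_P_r[OF a])
      show "twstar \<theta> ?P0 = ?P0" by (rule P_r_hermitian[OF sa a0])
      show "m * (l2norm \<xi>)\<^sup>2 \<le> qform \<theta> ?P0 \<xi>" if "finsupp2 \<xi>" for \<xi>
        using r0 by (intro qform_P_r_ge[OF a a0 lb _ _ that]) auto
      show "qform \<theta> ?P0 \<xi> \<le> (l1norm a + m) * (l2norm \<xi>)\<^sup>2" if x: "finsupp2 \<xi>" for \<xi>
      proof -
        have "qform \<theta> ?P0 \<xi> \<le> l1norm ?P0 * (l2norm \<xi>)\<^sup>2"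
          using abs_qform_le_l1norm[OF finsupp2_P_r[OF a, of "complex_of_real r0"] x, of \<theta>] by linarith
        also have "\<dots> \<le> (l1norm a + m) * (l2norm \<xi>)\<^sup>2"
          using l1norm_P_r_le[OF a a0, of r0] r0 m by (intro mult_right_mono) auto
        finally show ?thesis .
      qed
      show "finsupp2 ?e" using a by (intro finsupp2_diff finsupp2_P_r)
    qed (use m s near l1norm_nonneg[of a] in auto)
    moreover have "(\<lambda>k. ?P0 k + ?e k + complex_of_real (- s) * twone k) = P_r a r - (\<lambda>k. z * twone k)"
      by (simp add: fun_eq_iff s)
    ultimately show False using z by (simp add: tw_spectrum_def)
  qed
qed

lemma tw_log_definable_if_tw_spectrum_subset:
  "tw_spectrum \<theta> x \<subseteq> - \<real>\<^sub>\<le>\<^sub>0 \<Longrightarrow> tw_log_definable \<theta> x"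
  unfolding tw_log_definable_def
  by (intro exI[of _ "- \<real>\<^sub>\<le>\<^sub>0"] conjI holomorphic_on_Ln open_Compl closed_nonpos_Reals_complex) auto

theorem proposition2p3:
  fixes \<theta> :: real and a :: coeffs
  assumes "\<theta> \<notin> \<rat>"
    and "finsupp2 a"
    and "tw_strictly_pos \<theta> a"
    and "a (0, 0) = 1"
  shows "\<exists>W. open W \<and> complex_of_real ` {0..1} \<subseteq> W \<and>
           (\<forall>r\<in>W. tw_log_definable \<theta> (P_r a r))"
proof -
  have a: "finsupp2 a" and a0: "a (0, 0) = 1" and sa: "twstar \<theta> a = a"
    using assms by (auto simp: tw_strictly_pos_def)
  obtain m where m: "m > 0" and lb: "\<And>\<xi>. finsupp2 \<xi> \<Longrightarrow> m * (l2norm \<xi>)\<^sup>2 \<le> qform \<theta> a \<xi>"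
    using qform_lower_bound_if_strictly_pos[OF a assms(3)] by blast
  have "\<exists>\<delta>>0. \<forall>r. dist r (complex_of_real r0) < \<delta> \<longrightarrow>
      twnorm \<theta> (\<lambda>k. P_r a r k - P_r a (complex_of_real r0) k) < m / 2" for r0
    using twnorm_P_r_diff_small[OF a, of "m / 2"] m by (metis half_gt_zero)
  then obtain \<delta> where \<delta>: "\<And>r0. \<delta> r0 > 0" "\<And>r0 r. dist r (complex_of_real r0) < \<delta> r0 \<Longrightarrow>
      twnorm \<theta> (\<lambda>k. P_r a r k - P_r a (complex_of_real r0) k) < m / 2"
    by metis
  define W where "W = (\<Union>r0\<in>{0..1::real}. ball (complex_of_real r0) (\<delta> r0))"
  have "tw_log_definable \<theta> (P_r a r)" if r: "r \<in> W" for r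
  proof -
    obtain r0 where "r0 \<in> {0..1}" "dist r (complex_of_real r0) < \<delta> r0"
      using r unfolding W_def by (auto simp: dist_commute)
    then show ?thesis
      using \<delta>(2) by (intro tw_log_definable_if_tw_spectrum_subset tw_spectrum_P_r_near[OF a sa a0 m lb])
        (auto intro: less_imp_le)
  qed
  moreover have "open W" "complex_of_real ` {0..1} \<subseteq> W" unfolding W_def using \<delta>(1) by auto
  ultimately show ?thesis by blast
qed

end
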